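(* Let $F:\mathbf{PolyEnd}\to\mathbf{PolyEnd}$, $\mathsf P\mapsto\overline{\mathsf P}$, be the free-monad monad. For every polynomial endofunctor $\mathsf P$, the functor $\mathbf{PolyEnd}/\mathsf P\to\mathbf{PolyEnd}/\overline{\mathsf P}$, $[\mathsf Q\to\mathsf P]\mapsto[\overline{\mathsf Q}\to\overline{\mathsf P}]$, has a left adjoint.
   Context: A polynomial endofunctor is a diagram of sets $P_0\xleftarrow{s}P_2\xrightarrow{p}P_1\xrightarrow{t}P_0$ with $p$ having finite fibres; a morphism is a triple of maps commuting with $s,p,t$ whose middle square is a pullback; these form $\mathbf{PolyEnd}$. A tree is a polynomial endofunctor with all sets finite, $t$ injective, $s$ injective with singleton complement (the root), and such that iterating $\sigma$ ($\sigma(\mathrm{root})=\mathrm{root}$, $\sigma(e)=t(p(e))$ for $e\in T_2$) brings every edge to the root. A $\mathsf P$-tree is a tree with a morphism to $\mathsf P$. The free monad on $\mathsf P$ is $\overline{\mathsf P}:\ P_0\leftarrow\mathrm{tr}'(\mathsf P)\to\mathrm{tr}(\mathsf P)\to P_0$, where $\mathrm{tr}(\mathsf P)$ is the set of isomorphism classes of $\mathsf P$-trees, $\mathrm{tr}'(\mathsf P)$ those with a marked leaf, the maps returning the decoration of the marked leaf, forgetting the mark, and returning the decoration of the root; for a morphism $\alpha:\mathsf Q\to\mathsf P$, $\overline\alpha$ composes decorations with $\alpha$. *)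

theory Defs
  imports Main
begin

section \<open>Polynomial endofunctors  P0 <-s- P2 -p-> P1 -t-> P0\<close>

record ('a, 'b, 'c) polyend =
  E0 :: "'a set"
  E1 :: "'b set"
  E2 :: "'c set"
  src :: "'c \<Rightarrow> 'a"
  prj :: "'c \<Rightarrow> 'b"
  tgt :: "'b \<Rightarrow> 'a"

definition fibre :: "('a, 'b, 'c) polyend \<Rightarrow> 'b \<Rightarrow> 'c set" where
  "fibre P b = {e \<in> E2 P. prj P e = b}"

definition polyend :: "('a, 'b, 'c) polyend \<Rightarrow> bool" where
  "polyend P \<longleftrightarrow>
     (\<forall>e\<in>E2 P. src P e \<in> E0 P) \<and> (\<forall>e\<in>E2 P. prj P e \<in> E1 P) \<and>
     (\<forall>b\<in>E1 P. tgt P b \<in> E0 P) \<and> (\<forall>b\<in>E1 P. finite (fibre P b))"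

text \<open>Morphisms: triples of maps commuting with s, p, t, middle square a pullback.\<close>

record ('a, 'b, 'c, 'd, 'e, 'f) pmor =
  m0 :: "'a \<Rightarrow> 'd"
  m1 :: "'b \<Rightarrow> 'e"
  m2 :: "'c \<Rightarrow> 'f"

definition is_mor ::
  "('a, 'b, 'c) polyend \<Rightarrow> ('d, 'e, 'f) polyend \<Rightarrow> ('a, 'b, 'c, 'd, 'e, 'f) pmor \<Rightarrow> bool" where
  "is_mor Q P f \<longleftrightarrow> polyend Q \<and> polyend P \<and>
     (\<forall>a\<in>E0 Q. m0 f a \<in> E0 P) \<and> (\<forall>b\<in>E1 Q. m1 f b \<in> E1 P) \<and> (\<forall>e\<in>E2 Q. m2 f e \<in> E2 P) \<and>
     (\<forall>e\<in>E2 Q. m0 f (src Q e) = src P (m2 f e)) \<and>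
     (\<forall>e\<in>E2 Q. m1 f (prj Q e) = prj P (m2 f e)) \<and>
     (\<forall>b\<in>E1 Q. m0 f (tgt Q b) = tgt P (m1 f b)) \<and>
     (\<forall>b\<in>E1 Q. bij_betw (m2 f) (fibre Q b) (fibre P (m1 f b)))"

definition pcomp ::
  "('d, 'e, 'f, 'g, 'h, 'i) pmor \<Rightarrow> ('a, 'b, 'c, 'd, 'e, 'f) pmor \<Rightarrow> ('a, 'b, 'c, 'g, 'h, 'i) pmor" where
  "pcomp g f = \<lparr>m0 = m0 g \<circ> m0 f, m1 = m1 g \<circ> m1 f, m2 = m2 g \<circ> m2 f\<rparr>"

definition pid :: "('a, 'b, 'c, 'a, 'b, 'c) pmor" where
  "pid = \<lparr>m0 = id, m1 = id, m2 = id\<rparr>"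

definition mor_eq ::
  "('a, 'b, 'c) polyend \<Rightarrow> ('a, 'b, 'c, 'd, 'e, 'f) pmor \<Rightarrow> ('a, 'b, 'c, 'd, 'e, 'f) pmor \<Rightarrow> bool" where
  "mor_eq Q f g \<longleftrightarrow> (\<forall>a\<in>E0 Q. m0 f a = m0 g a) \<and> (\<forall>b\<in>E1 Q. m1 f b = m1 g b) \<and>
                     (\<forall>e\<in>E2 Q. m2 f e = m2 g e)"

definition is_root :: "('a, 'b, 'c) polyend \<Rightarrow> 'a \<Rightarrow> bool" where
  "is_root T r \<longleftrightarrow> r \<in> E0 T \<and> r \<notin> src T ` E2 T"

definition root :: "('a, 'b, 'c) polyend \<Rightarrow> 'a" where
  "root T = (THE r. is_root T r)"

text \<open>sigma(root) = root, sigma(s e) = t(p e) for e in T2 (T2 identified with s(T2)).\<close>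
definition sigma :: "('a, 'b, 'c) polyend \<Rightarrow> 'a \<Rightarrow> 'a" where
  "sigma T x = (if \<exists>e\<in>E2 T. src T e = x
                then tgt T (prj T (THE e. e \<in> E2 T \<and> src T e = x)) else x)"

definition is_tree :: "('a, 'b, 'c) polyend \<Rightarrow> bool" where
  "is_tree T \<longleftrightarrow> polyend T \<and> finite (E0 T) \<and> finite (E1 T) \<and> finite (E2 T) \<and>
     inj_on (tgt T) (E1 T) \<and> inj_on (src T) (E2 T) \<and>
     (\<exists>r. E0 T - src T ` E2 T = {r}) \<and>
     (\<forall>x\<in>E0 T. \<exists>n. (sigma T ^^ n) x = root T)"

definition leaves :: "('a, 'b, 'c) polyend \<Rightarrow> 'a set" where
  "leaves T = E0 T - tgt T ` E1 T"

text \<open>P-trees.  Every finite tree is isomorphic to one whose carriers are sets of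
  natural numbers, so isomorphism classes are represented by such trees.\<close>

type_synonym ntree = "(nat, nat, nat) polyend"
type_synonym ('a, 'b, 'c) ptree = "ntree \<times> (nat, nat, nat, 'a, 'b, 'c) pmor"

definition ptrees :: "('a, 'b, 'c) polyend \<Rightarrow> ('a, 'b, 'c) ptree set" where
  "ptrees P = {(T, d). is_tree T \<and> is_mor T P d}"

definition ptree_iso_via ::
  "('a, 'b, 'c) ptree \<Rightarrow> ('a, 'b, 'c) ptree \<Rightarrow> (nat, nat, nat, nat, nat, nat) pmor \<Rightarrow> bool" where
  "ptree_iso_via x y f \<longleftrightarrow> (case (x, y) of ((T, d), (T', d')) \<Rightarrow>
      (\<exists>g. is_mor T T' f \<and> is_mor T' T g \<and> mor_eq T (pcomp g f) pid \<and> mor_eq T' (pcomp f g) pid \<and>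
           mor_eq T (pcomp d' f) d))"

definition ptree_iso :: "('a, 'b, 'c) ptree \<Rightarrow> ('a, 'b, 'c) ptree \<Rightarrow> bool" where
  "ptree_iso x y \<longleftrightarrow> (\<exists>f. ptree_iso_via x y f)"

definition mptree_iso :: "('a, 'b, 'c) ptree \<times> nat \<Rightarrow> ('a, 'b, 'c) ptree \<times> nat \<Rightarrow> bool" where
  "mptree_iso x y \<longleftrightarrow> (\<exists>f. ptree_iso_via (fst x) (fst y) f \<and> m0 f (snd x) = snd y)"

definition mptrees :: "('a, 'b, 'c) polyend \<Rightarrow> (('a, 'b, 'c) ptree \<times> nat) set" where
  "mptrees P = {(x, l). x \<in> ptrees P \<and> l \<in> leaves (fst x)}"

definition pclass :: "('a, 'b, 'c) polyend \<Rightarrow> ('a, 'b, 'c) ptree \<Rightarrow> ('a, 'b, 'c) ptree set" where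
  "pclass P x = {y \<in> ptrees P. ptree_iso x y}"

definition mclass :: "('a, 'b, 'c) polyend \<Rightarrow> ('a, 'b, 'c) ptree \<times> nat \<Rightarrow> (('a, 'b, 'c) ptree \<times> nat) set" where
  "mclass P x = {y \<in> mptrees P. mptree_iso x y}"

definition tr :: "('a, 'b, 'c) polyend \<Rightarrow> ('a, 'b, 'c) ptree set set" where
  "tr P = pclass P ` ptrees P"

definition trm :: "('a, 'b, 'c) polyend \<Rightarrow> (('a, 'b, 'c) ptree \<times> nat) set set" where
  "trm P = mclass P ` mptrees P"

definition free_monad ::
  "('a, 'b, 'c) polyend \<Rightarrow> ('a, ('a, 'b, 'c) ptree set, (('a, 'b, 'c) ptree \<times> nat) set) polyend" where
  "free_monad P =
     \<lparr>E0 = E0 P, E1 = tr P, E2 = trm P,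
      src = (\<lambda>c. let ((T, d), l) = (SOME r. r \<in> c) in m0 d l),
      prj = (\<lambda>c. pclass P (fst (SOME r. r \<in> c))),
      tgt = (\<lambda>c. let (T, d) = (SOME r. r \<in> c) in m0 d (root T))\<rparr>"

definition free_mor ::
  "('d, 'e, 'f) polyend \<Rightarrow> ('a, 'b, 'c, 'd, 'e, 'f) pmor \<Rightarrow>
   ('a, ('a, 'b, 'c) ptree set, (('a, 'b, 'c) ptree \<times> nat) set,
    'd, ('d, 'e, 'f) ptree set, (('d, 'e, 'f) ptree \<times> nat) set) pmor" where
  "free_mor P \<alpha> =
     \<lparr>m0 = m0 \<alpha>,
      m1 = (\<lambda>c. let (T, d) = (SOME r. r \<in> c) in pclass P (T, pcomp \<alpha> d)),
      m2 = (\<lambda>c. let ((T, d), l) = (SOME r. r \<in> c) in mclass P ((T, pcomp \<alpha> d), l))\<rparr>"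

text \<open>Given an object (X, phi : X -> free_monad P) of PolyEnd/free_monad P, a candidate
  (L, lam : L -> P) with eta : (X, phi) -> (free_monad L, free_mor P lam), and a test object
  (Q, kappa : Q -> P) with h : (X, phi) -> (free_monad Q, free_mor P kappa): h factors uniquely
  as free_mor Q g o eta for a morphism g : (L, lam) -> (Q, kappa) of PolyEnd/P.\<close>
definition factors_uniquely where
  "factors_uniquely P X \<phi> L lam \<eta> Q \<kappa> h \<longleftrightarrow>
     (is_mor Q P \<kappa> \<and> is_mor X (free_monad Q) h \<and> mor_eq X (pcomp (free_mor P \<kappa>) h) \<phi> \<longrightarrow>
      (\<exists>g. is_mor L Q g \<and> mor_eq L (pcomp \<kappa> g) lam \<and> mor_eq X (pcomp (free_mor Q g) \<eta>) h \<and>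
           (\<forall>g'. is_mor L Q g' \<and> mor_eq L (pcomp \<kappa> g') lam \<and> mor_eq X (pcomp (free_mor Q g') \<eta>) h
                 \<longrightarrow> mor_eq L g' g)))"

definition arrow_ok where
  "arrow_ok P X \<phi> L lam \<eta> \<longleftrightarrow>
     is_mor L P lam \<and> is_mor X (free_monad L) \<eta> \<and> mor_eq X (pcomp (free_mor P lam) \<eta>) \<phi>"

end

theory Submission
  imports Defs
begin

(*
  Let phi : X -> free_monad P.  Each x in X1 is sent to an isomorphism class of
  P-trees; we choose a representative P-tree (T_x, D_x).  Since the fibre of the
  free monad over a tree is its set of leaves, the X-edges over x correspond
  bijectively to the leaves of T_x.  The universal object is the polynomial
  endofunctor L obtained by GLUING the trees T_x: take their disjoint union and
  identify each leaf of T_x with the colour src e of the X-edge e it corresponds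
  to, and the root of T_x with tgt x.  The decorations D_x assemble into
  lambda : L -> P and the inclusions T_x -> L into the unit eta : X -> free_monad L.
  Given kappa : Q -> P and h : X -> free_monad Q over free_monad P, the trees h(x)
  can be chosen on the same shapes T_x, and they assemble into a morphism L -> Q.
  Since there is such a universal arrow for every object, the functor has a left
  adjoint.  Uniqueness rests on the RIGIDITY of trees: a morphism out of a tree that is
  compatible with decorations is determined by the image of the root.
*)

lemma pcomp_simps [simp]:
  "m0 (pcomp g f) = m0 g \<circ> m0 f" "m1 (pcomp g f) = m1 g \<circ> m1 f" "m2 (pcomp g f) = m2 g \<circ> m2 f"
  by (simp_all add: pcomp_def)

lemma pid_simps [simp]: "m0 pid = id" "m1 pid = id" "m2 pid = id"
  by (simp_all add: pid_def)

lemma polyendD: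
  assumes "polyend P"
  shows "\<And>e. e \<in> E2 P \<Longrightarrow> src P e \<in> E0 P" "\<And>e. e \<in> E2 P \<Longrightarrow> prj P e \<in> E1 P"
    "\<And>b. b \<in> E1 P \<Longrightarrow> tgt P b \<in> E0 P" "\<And>b. b \<in> E1 P \<Longrightarrow> finite (fibre P b)"
  using assms unfolding polyend_def by auto

lemma is_morD:
  assumes "is_mor Q P f"
  shows "polyend Q" "polyend P"
    "\<And>a. a \<in> E0 Q \<Longrightarrow> m0 f a \<in> E0 P"
    "\<And>b. b \<in> E1 Q \<Longrightarrow> m1 f b \<in> E1 P"
    "\<And>e. e \<in> E2 Q \<Longrightarrow> m2 f e \<in> E2 P"
    "\<And>e. e \<in> E2 Q \<Longrightarrow> m0 f (src Q e) = src P (m2 f e)"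
    "\<And>e. e \<in> E2 Q \<Longrightarrow> m1 f (prj Q e) = prj P (m2 f e)"
    "\<And>b. b \<in> E1 Q \<Longrightarrow> m0 f (tgt Q b) = tgt P (m1 f b)"
    "\<And>b. b \<in> E1 Q \<Longrightarrow> bij_betw (m2 f) (fibre Q b) (fibre P (m1 f b))"
  using assms unfolding is_mor_def by auto

lemma mor_comp:
  assumes f: "is_mor A B f" and g: "is_mor B C g"
  shows "is_mor A C (pcomp g f)"
proof -
  have "bij_betw (m2 g \<circ> m2 f) (fibre A b) (fibre C (m1 g (m1 f b)))" if "b \<in> E1 A" for b
    using bij_betw_trans is_morD(9)[OF f that] is_morD(9)[OF g is_morD(4)[OF f that]] by blast
  then show ?thesis using is_morD[OF f] is_morD[OF g] unfolding is_mor_def by auto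
qed

lemma mor_id: "polyend Q \<Longrightarrow> is_mor Q Q pid"
  unfolding is_mor_def by (auto simp: polyend_def)

lemma mor_eq_refl: "mor_eq Q f f"
  by (auto simp: mor_eq_def)

lemma mor_eq_sym: "mor_eq Q f g \<Longrightarrow> mor_eq Q g f"
  by (auto simp: mor_eq_def)

lemma mor_cong:
  assumes f: "is_mor Q P f" and eq: "mor_eq Q f f'"
  shows "is_mor Q P f'"
proof -
  have "bij_betw (m2 f') (fibre Q b) (fibre P (m1 f' b))" if "b \<in> E1 Q" for b
  proof -
    have "bij_betw (m2 f) (fibre Q b) (fibre P (m1 f' b))"
      using is_morD(9)[OF f that] eq that unfolding mor_eq_def by auto
    then show ?thesis
      by (rule bij_betw_cong[THEN iffD1, rotated]) (use eq in \<open>auto simp: mor_eq_def fibre_def\<close>)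
  qed
  then show ?thesis using is_morD[OF f] polyendD[OF is_morD(1)[OF f]] eq
    unfolding is_mor_def mor_eq_def by (intro conjI ballI; metis)
qed

section \<open>Isomorphisms and isomorphism classes of P-trees\<close>

definition is_iso :: "('a, 'b, 'c) polyend \<Rightarrow> ('d, 'e, 'f) polyend \<Rightarrow> ('a, 'b, 'c, 'd, 'e, 'f) pmor \<Rightarrow> bool" where
  "is_iso T T' f \<longleftrightarrow> (\<exists>g. is_mor T T' f \<and> is_mor T' T g \<and> mor_eq T (pcomp g f) pid \<and> mor_eq T' (pcomp f g) pid)"

lemma ptree_iso_via_iff:
  "ptree_iso_via (T, d) (T', d') f \<longleftrightarrow> is_iso T T' f \<and> mor_eq T (pcomp d' f) d"
  unfolding ptree_iso_via_def is_iso_def by auto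

lemma is_isoE:
  assumes "is_iso T T' f"
  obtains g where "is_mor T T' f" "is_mor T' T g" "is_iso T' T g"
    "\<And>a. a \<in> E0 T \<Longrightarrow> m0 g (m0 f a) = a" "\<And>b. b \<in> E1 T \<Longrightarrow> m1 g (m1 f b) = b"
    "\<And>e. e \<in> E2 T \<Longrightarrow> m2 g (m2 f e) = e"
    "\<And>a. a \<in> E0 T' \<Longrightarrow> m0 f (m0 g a) = a" "\<And>b. b \<in> E1 T' \<Longrightarrow> m1 f (m1 g b) = b"
    "\<And>e. e \<in> E2 T' \<Longrightarrow> m2 f (m2 g e) = e"
proof -
  from assms obtain g where g: "is_mor T T' f" "is_mor T' T g"
      "mor_eq T (pcomp g f) pid" "mor_eq T' (pcomp f g) pid"
    unfolding is_iso_def by blast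
  then have "is_iso T' T g" unfolding is_iso_def by blast
  then show ?thesis using that[of g] g unfolding mor_eq_def by simp
qed

lemma iso_refl: "polyend T \<Longrightarrow> is_iso T T pid"
  unfolding is_iso_def by (rule exI[of _ pid]) (auto simp: mor_eq_def mor_id)

lemma iso_trans:
  assumes f: "is_iso T T' f" and f': "is_iso T' T'' f'"
  shows "is_iso T T'' (pcomp f' f)"
proof -
  obtain g where g: "is_mor T T' f" "is_mor T' T g" "is_iso T' T g"
    "\<And>a. a \<in> E0 T \<Longrightarrow> m0 g (m0 f a) = a" "\<And>b. b \<in> E1 T \<Longrightarrow> m1 g (m1 f b) = b"
    "\<And>e. e \<in> E2 T \<Longrightarrow> m2 g (m2 f e) = e"
    "\<And>a. a \<in> E0 T' \<Longrightarrow> m0 f (m0 g a) = a" "\<And>b. b \<in> E1 T' \<Longrightarrow> m1 f (m1 g b) = b"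
    "\<And>e. e \<in> E2 T' \<Longrightarrow> m2 f (m2 g e) = e"
    by (rule is_isoE[OF f]) blast
  obtain g' where g': "is_mor T' T'' f'" "is_mor T'' T' g'" "is_iso T'' T' g'"
    "\<And>a. a \<in> E0 T' \<Longrightarrow> m0 g' (m0 f' a) = a" "\<And>b. b \<in> E1 T' \<Longrightarrow> m1 g' (m1 f' b) = b"
    "\<And>e. e \<in> E2 T' \<Longrightarrow> m2 g' (m2 f' e) = e"
    "\<And>a. a \<in> E0 T'' \<Longrightarrow> m0 f' (m0 g' a) = a" "\<And>b. b \<in> E1 T'' \<Longrightarrow> m1 f' (m1 g' b) = b"
    "\<And>e. e \<in> E2 T'' \<Longrightarrow> m2 f' (m2 g' e) = e"
    by (rule is_isoE[OF f']) blast
  have "mor_eq T (pcomp (pcomp g g') (pcomp f' f)) pid"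
    unfolding mor_eq_def using g(4-6) g'(4-6) is_morD(3-5)[OF g(1)] by simp
  moreover have "mor_eq T'' (pcomp (pcomp f' f) (pcomp g g')) pid"
    unfolding mor_eq_def using g(7-9) g'(7-9) is_morD(3-5)[OF g'(2)] by simp
  ultimately show ?thesis
    unfolding is_iso_def using mor_comp[OF g(1) g'(1)] mor_comp[OF g'(2) g(2)] by blast
qed

text \<open>The inverse of a P-tree isomorphism is again one; it also inverts the colour map, which is
  what marked leaves need.\<close>
lemma ptree_iso_via_sym:
  assumes "ptree_iso_via x y f"
  obtains g where "ptree_iso_via y x g"
    "\<And>a. a \<in> E0 (fst x) \<Longrightarrow> m0 g (m0 f a) = a"
proof -
  obtain T d T' d' where xy: "x = (T, d)" "y = (T', d')" by (cases x, cases y) auto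
  from assms have i: "is_iso T T' f" and e: "mor_eq T (pcomp d' f) d"
    by (auto simp: xy ptree_iso_via_iff)
  obtain g where g: "is_mor T T' f" "is_mor T' T g" "is_iso T' T g"
    "\<And>a. a \<in> E0 T \<Longrightarrow> m0 g (m0 f a) = a" "\<And>b. b \<in> E1 T \<Longrightarrow> m1 g (m1 f b) = b"
    "\<And>e. e \<in> E2 T \<Longrightarrow> m2 g (m2 f e) = e"
    "\<And>a. a \<in> E0 T' \<Longrightarrow> m0 f (m0 g a) = a" "\<And>b. b \<in> E1 T' \<Longrightarrow> m1 f (m1 g b) = b"
    "\<And>e. e \<in> E2 T' \<Longrightarrow> m2 f (m2 g e) = e"
    by (rule is_isoE[OF i]) blast
  have "mor_eq T' (pcomp d g) d'"
    unfolding mor_eq_def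
  proof (intro conjI ballI)
    fix a assume a: "a \<in> E0 T'"
    have "m0 d (m0 g a) = m0 d' (m0 f (m0 g a))" using e is_morD(3)[OF g(2) a] by (simp add: mor_eq_def)
    then show "m0 (pcomp d g) a = m0 d' a" using g(7)[OF a] by simp
  next
    fix b assume b: "b \<in> E1 T'"
    have "m1 d (m1 g b) = m1 d' (m1 f (m1 g b))" using e is_morD(4)[OF g(2) b] by (simp add: mor_eq_def)
    then show "m1 (pcomp d g) b = m1 d' b" using g(8)[OF b] by simp
  next
    fix c assume c: "c \<in> E2 T'"
    have "m2 d (m2 g c) = m2 d' (m2 f (m2 g c))" using e is_morD(5)[OF g(2) c] by (simp add: mor_eq_def)
    then show "m2 (pcomp d g) c = m2 d' c" using g(9)[OF c] by simp
  qed
  then show ?thesis using that[of g] g by (auto simp: xy ptree_iso_via_iff)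
qed

lemma ptree_iso_via_trans:
  assumes "ptree_iso_via x y f" "ptree_iso_via y z f'"
  shows "ptree_iso_via x z (pcomp f' f)"
proof -
  obtain T d T' d' T'' d'' where xyz: "x = (T, d)" "y = (T', d')" "z = (T'', d'')"
    by (cases x, cases y, cases z) auto
  from assms have i: "is_iso T T' f" "is_iso T' T'' f'"
    and e: "mor_eq T (pcomp d' f) d" "mor_eq T' (pcomp d'' f') d'"
    by (auto simp: xyz ptree_iso_via_iff)
  have f: "is_mor T T' f" using i(1) unfolding is_iso_def by auto
  have "mor_eq T (pcomp d'' (pcomp f' f)) d"
    using e is_morD(3-5)[OF f] unfolding mor_eq_def by auto
  then show ?thesis using iso_trans[OF i] by (auto simp: xyz ptree_iso_via_iff)
qed

lemma ptree_iso_via_refl: "x \<in> ptrees P \<Longrightarrow> ptree_iso_via x x pid"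
  unfolding ptrees_def
  by (cases x) (auto simp: ptree_iso_via_iff mor_eq_def is_tree_def intro!: iso_refl)

lemma ptree_iso_refl: "x \<in> ptrees P \<Longrightarrow> ptree_iso x x"
  unfolding ptree_iso_def using ptree_iso_via_refl by blast

lemma ptree_iso_sym: "ptree_iso x y \<Longrightarrow> ptree_iso y x"
  unfolding ptree_iso_def using ptree_iso_via_sym by blast

lemma ptree_iso_trans: "ptree_iso x y \<Longrightarrow> ptree_iso y z \<Longrightarrow> ptree_iso x z"
  unfolding ptree_iso_def using ptree_iso_via_trans by blast

lemma mptree_iso_refl: "fst x \<in> ptrees P \<Longrightarrow> mptree_iso x x"
  unfolding mptree_iso_def using ptree_iso_via_refl by fastforce

lemma mptree_iso_sym:
  assumes "mptree_iso x y" and "snd x \<in> E0 (fst (fst x))"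
  shows "mptree_iso y x"
proof -
  obtain f where f: "ptree_iso_via (fst x) (fst y) f" "m0 f (snd x) = snd y"
    using assms(1) unfolding mptree_iso_def by blast
  obtain g where g: "ptree_iso_via (fst y) (fst x) g"
    and gf: "\<And>a. a \<in> E0 (fst (fst x)) \<Longrightarrow> m0 g (m0 f a) = a"
    by (rule ptree_iso_via_sym[OF f(1)]) blast
  have "m0 g (snd y) = snd x" using gf[OF assms(2)] f(2) by simp
  then show ?thesis unfolding mptree_iso_def using g by auto
qed

lemma mptree_iso_trans: "mptree_iso x y \<Longrightarrow> mptree_iso y z \<Longrightarrow> mptree_iso x z"
  unfolding mptree_iso_def using ptree_iso_via_trans by fastforce

section \<open>Trees\<close>

lemma tree_polyend: "is_tree T \<Longrightarrow> polyend T"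
  by (simp add: is_tree_def)

lemma tree_root_eq:
  assumes "is_tree T" shows "E0 T - src T ` E2 T = {root T}"
proof -
  obtain r where r: "E0 T - src T ` E2 T = {r}" using assms unfolding is_tree_def by blast
  have "root T = r" unfolding root_def
    by (rule the_equality) (use r in \<open>auto simp: is_root_def\<close>)
  then show ?thesis using r by simp
qed

lemma tree_root: "is_tree T \<Longrightarrow> root T \<in> E0 T" "is_tree T \<Longrightarrow> root T \<notin> src T ` E2 T"
  using tree_root_eq by blast+

lemma tree_nonroot: "is_tree T \<Longrightarrow> x \<in> E0 T \<Longrightarrow> x \<noteq> root T \<Longrightarrow> \<exists>e\<in>E2 T. src T e = x"
  using tree_root_eq by blast

lemma sigma_src:
  assumes "is_tree T" "e \<in> E2 T" shows "sigma T (src T e) = tgt T (prj T e)"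
proof -
  have inj: "inj_on (src T) (E2 T)" using assms by (simp add: is_tree_def)
  have "(THE e'. e' \<in> E2 T \<and> src T e' = src T e) = e"
    by (rule the_equality) (use assms inj in \<open>auto dest: inj_onD\<close>)
  then show ?thesis using assms unfolding sigma_def by auto
qed

lemma iso_root:
  assumes T: "is_tree T" and T': "is_tree T'" and i: "is_iso T T' f"
  shows "m0 f (root T) = root T'"
proof (rule ccontr)
  assume ne: "m0 f (root T) \<noteq> root T'"
  obtain g where f: "is_mor T T' f" and g: "is_mor T' T g"
    and gf: "\<And>a. a \<in> E0 T \<Longrightarrow> m0 g (m0 f a) = a"
    by (rule is_isoE[OF i]) blast
  have "m0 f (root T) \<in> E0 T'" using is_morD(3)[OF f] tree_root[OF T] by blast
  then obtain e where e: "e \<in> E2 T'" "src T' e = m0 f (root T)" using tree_nonroot[OF T'] ne by blast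
  have "src T (m2 g e) = m0 g (src T' e)" using is_morD(6)[OF g e(1)] by simp
  also have "\<dots> = root T" using e(2) gf tree_root[OF T] by simp
  finally show False using tree_root(2)[OF T] is_morD(5)[OF g e(1)] by (metis image_eqI)
qed

lemma iso_leaf:
  assumes i: "is_iso T T' f" and l: "l \<in> leaves T"
  shows "m0 f l \<in> leaves T'"
proof -
  obtain g where f: "is_mor T T' f" and g: "is_mor T' T g"
    and gf: "\<And>a. a \<in> E0 T \<Longrightarrow> m0 g (m0 f a) = a"
    by (rule is_isoE[OF i]) blast
  have l0: "l \<in> E0 T" "l \<notin> tgt T ` E1 T" using l by (auto simp: leaves_def)
  have "m0 f l \<notin> tgt T' ` E1 T'"
  proof
    assume "m0 f l \<in> tgt T' ` E1 T'"
    then obtain b where b: "b \<in> E1 T'" "tgt T' b = m0 f l" by auto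
    have "tgt T (m1 g b) = m0 g (tgt T' b)" using is_morD(8)[OF g b(1)] by simp
    also have "\<dots> = l" using b(2) gf l0 by simp
    finally show False using l0(2) is_morD(4)[OF g b(1)] by blast
  qed
  then show ?thesis using is_morD(3)[OF f l0(1)] by (simp add: leaves_def)
qed

text \<open>One step of rigidity: two morphisms of a tree into a P-tree that agree on the output of
  an edge and are compatible with the decoration agree on the edge itself (the decoration is
  injective on each fibre and the output colour determines the node).\<close>
lemma rigid_edge:
  assumes T': "is_tree T'" and d': "is_mor T' P d'"
    and f1: "is_mor T T' f1" and f2: "is_mor T T' f2" and e: "e \<in> E2 T"
    and out: "m0 f1 (tgt T (prj T e)) = m0 f2 (tgt T (prj T e))"
    and dd: "m2 d' (m2 f1 e) = m2 d' (m2 f2 e)"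
  shows "m1 f1 (prj T e) = m1 f2 (prj T e)" "m2 f1 e = m2 f2 e"
proof -
  have b: "prj T e \<in> E1 T" using polyendD(2)[OF is_morD(1)[OF f1] e] .
  have "tgt T' (m1 f1 (prj T e)) = tgt T' (m1 f2 (prj T e))"
    using out is_morD(8)[OF f1 b] is_morD(8)[OF f2 b] by simp
  moreover have "inj_on (tgt T') (E1 T')" using T' by (simp add: is_tree_def)
  ultimately show node: "m1 f1 (prj T e) = m1 f2 (prj T e)"
    using is_morD(4)[OF f1 b] is_morD(4)[OF f2 b] by (auto dest: inj_onD)
  have fib: "m2 f1 e \<in> fibre T' (m1 f1 (prj T e))" "m2 f2 e \<in> fibre T' (m1 f1 (prj T e))"
    using is_morD(5,7)[OF f1 e] is_morD(5,7)[OF f2 e] node by (auto simp: fibre_def)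
  have "inj_on (m2 d') (fibre T' (m1 f1 (prj T e)))"
    using is_morD(9)[OF d' is_morD(4)[OF f1 b]] by (simp add: bij_betw_def)
  then show "m2 f1 e = m2 f2 e" using fib dd by (auto dest: inj_onD)
qed

text \<open>Rigidity of trees: a morphism from a tree into a P-tree, compatible with the decoration,
  is determined by the image of the root.  Proof by induction on the distance to the root.\<close>
lemma rigid:
  assumes T: "is_tree T" and T': "is_tree T'" and d': "is_mor T' P d'"
    and f1: "is_mor T T' f1" and f2: "is_mor T T' f2"
    and r: "m0 f1 (root T) = m0 f2 (root T)"
    and dd: "\<And>e. e \<in> E2 T \<Longrightarrow> m2 d' (m2 f1 e) = m2 d' (m2 f2 e)"
  shows "mor_eq T f1 f2"
proof -
  note pT = polyendD[OF tree_polyend[OF T]]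
  have step: "\<And>e. e \<in> E2 T \<Longrightarrow> m0 f1 (tgt T (prj T e)) = m0 f2 (tgt T (prj T e)) \<Longrightarrow>
      m2 f1 e = m2 f2 e"
    using rigid_edge(2)[OF T' d' f1 f2] dd by blast
  have colour: "m0 f1 x = m0 f2 x" if "x \<in> E0 T" "(sigma T ^^ n) x = root T" for n x
    using that
  proof (induction n arbitrary: x)
    case 0 then show ?case using r by simp
  next
    case (Suc n)
    show ?case
    proof (cases "x = root T")
      case True then show ?thesis using r by simp
    next
      case False
      then obtain e where e: "e \<in> E2 T" "src T e = x" using tree_nonroot[OF T Suc.prems(1)] by blast
      have "(sigma T ^^ n) (tgt T (prj T e)) = root T"
        using Suc.prems(2) sigma_src[OF T e(1)] e(2) by (simp only: funpow_Suc_right o_apply)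
      moreover have "tgt T (prj T e) \<in> E0 T" using pT(2,3) e(1) by blast
      ultimately have "m0 f1 (tgt T (prj T e)) = m0 f2 (tgt T (prj T e))" using Suc.IH by blast
      then have "m2 f1 e = m2 f2 e" using step[OF e(1)] by blast
      then show ?thesis using is_morD(6)[OF f1 e(1)] is_morD(6)[OF f2 e(1)] e(2) by simp
    qed
  qed
  have e0: "\<And>x. x \<in> E0 T \<Longrightarrow> m0 f1 x = m0 f2 x"
    using colour T unfolding is_tree_def by blast
  have e2: "\<And>e. e \<in> E2 T \<Longrightarrow> m2 f1 e = m2 f2 e"
    using step e0 pT(2,3) by blast
  have e1: "\<And>b. b \<in> E1 T \<Longrightarrow> m1 f1 b = m1 f2 b"
  proof -
    fix b assume b: "b \<in> E1 T"
    have "tgt T' (m1 f1 b) = tgt T' (m1 f2 b)"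
      using e0 pT(3)[OF b] is_morD(8)[OF f1 b] is_morD(8)[OF f2 b] by simp
    moreover have "inj_on (tgt T') (E1 T')" using T' by (simp add: is_tree_def)
    ultimately show "m1 f1 b = m1 f2 b" using is_morD(4)[OF f1 b] is_morD(4)[OF f2 b] by (auto dest: inj_onD)
  qed
  show ?thesis unfolding mor_eq_def using e0 e1 e2 by blast
qed


section \<open>The free monad computed on representatives\<close>

text \<open>The structure maps of the free monad and of its action on morphisms are defined by choosing
  a representative of a class; the lemmas below show that they can be computed on ANY
  representative.\<close>

lemma free_monad_simps:
  "E0 (free_monad P) = E0 P" "E1 (free_monad P) = tr P" "E2 (free_monad P) = trm P"
  "src (free_monad P) c = m0 (snd (fst (SOME r. r \<in> c))) (snd (SOME r. r \<in> c))"
  "prj (free_monad P) c = pclass P (fst (SOME r. r \<in> c))"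
  "tgt (free_monad P) c' = m0 (snd (SOME r. r \<in> c')) (root (fst (SOME r. r \<in> c')))"
  by (simp_all add: free_monad_def Let_def split_beta)

lemma free_mor_simps:
  "m0 (free_mor P \<alpha>) = m0 \<alpha>"
  "m1 (free_mor P \<alpha>) c' = pclass P (fst (SOME r. r \<in> c'), pcomp \<alpha> (snd (SOME r. r \<in> c')))"
  "m2 (free_mor P \<alpha>) c =
     mclass P ((fst (fst (SOME r. r \<in> c)), pcomp \<alpha> (snd (fst (SOME r. r \<in> c)))), snd (SOME r. r \<in> c))"
  by (simp_all add: free_mor_def Let_def split_beta)

lemma ptrees_iff: "(T, d) \<in> ptrees P \<longleftrightarrow> is_tree T \<and> is_mor T P d"
  by (simp add: ptrees_def)

lemma mptrees_iff: "x \<in> mptrees P \<longleftrightarrow> fst x \<in> ptrees P \<and> snd x \<in> leaves (fst (fst x))"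
  unfolding mptrees_def by auto

lemma pclass_iff: "y \<in> pclass P r \<longleftrightarrow> y \<in> ptrees P \<and> ptree_iso r y"
  unfolding pclass_def by blast

lemma mclass_iff: "y \<in> mclass P r \<longleftrightarrow> y \<in> mptrees P \<and> mptree_iso r y"
  unfolding mclass_def by blast

lemma pclass_eq_iff:
  assumes "r \<in> ptrees P" "r' \<in> ptrees P"
  shows "pclass P r = pclass P r' \<longleftrightarrow> ptree_iso r r'"
proof
  assume "pclass P r = pclass P r'"
  then show "ptree_iso r r'" using ptree_iso_refl[OF assms(2)] assms(2) unfolding pclass_def by blast
next
  assume "ptree_iso r r'"
  then show "pclass P r = pclass P r'" unfolding pclass_def
    using ptree_iso_sym ptree_iso_trans by blast
qed

lemma mclass_eq_iff:
  assumes "r \<in> mptrees P" "r' \<in> mptrees P"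
  shows "mclass P r = mclass P r' \<longleftrightarrow> mptree_iso r r'"
proof
  assume "mclass P r = mclass P r'"
  moreover have "mptree_iso r' r'" using assms(2) by (intro mptree_iso_refl[of _ P]) (simp add: mptrees_iff)
  ultimately show "mptree_iso r r'" using assms(2) unfolding mclass_def by blast
next
  assume r: "mptree_iso r r'"
  have "snd r \<in> E0 (fst (fst r))" using assms(1) by (auto simp: mptrees_iff leaves_def)
  then have "mptree_iso r' r" using mptree_iso_sym[OF r] by blast
  then show "mclass P r = mclass P r'" unfolding mclass_def
    using mptree_iso_trans r by blast
qed

lemma pclass_some:
  assumes "r \<in> ptrees P"
  shows "(SOME y. y \<in> pclass P r) \<in> ptrees P" "ptree_iso r (SOME y. y \<in> pclass P r)"
proof -
  have "r \<in> pclass P r" using assms ptree_iso_refl[OF assms] unfolding pclass_def by blast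
  then have "(SOME y. y \<in> pclass P r) \<in> pclass P r" by (rule someI)
  then show "(SOME y. y \<in> pclass P r) \<in> ptrees P" "ptree_iso r (SOME y. y \<in> pclass P r)"
    by (auto simp: pclass_iff)
qed

lemma mclass_some:
  assumes "r \<in> mptrees P"
  shows "(SOME y. y \<in> mclass P r) \<in> mptrees P" "mptree_iso r (SOME y. y \<in> mclass P r)"
proof -
  have "mptree_iso r r" using assms by (intro mptree_iso_refl[of _ P]) (simp add: mptrees_iff)
  then have "r \<in> mclass P r" using assms unfolding mclass_def by blast
  then have "(SOME y. y \<in> mclass P r) \<in> mclass P r" by (rule someI)
  then show "(SOME y. y \<in> mclass P r) \<in> mptrees P" "mptree_iso r (SOME y. y \<in> mclass P r)"
    by (auto simp: mclass_iff)
qed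

lemma pclass_cong:
  assumes r: "(T, d) \<in> ptrees P" and e: "mor_eq T d d'"
  shows "(T, d') \<in> ptrees P" "pclass P (T, d') = pclass P (T, d)"
proof -
  show t: "(T, d') \<in> ptrees P" using r mor_cong e by (auto simp: ptrees_iff)
  have "ptree_iso_via (T, d) (T, d') pid"
    using iso_refl r e by (auto simp: ptree_iso_via_iff ptrees_iff is_tree_def mor_eq_def)
  then show "pclass P (T, d') = pclass P (T, d)" using pclass_eq_iff[OF r t] ptree_iso_def by blast
qed

lemma mclass_cong:
  assumes r: "((T, d), l) \<in> mptrees P" and e: "mor_eq T d d'"
  shows "mclass P ((T, d'), l) = mclass P ((T, d), l)"
proof -
  have t: "((T, d'), l) \<in> mptrees P" using r pclass_cong(1)[OF _ e] by (auto simp: mptrees_iff)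
  have "ptree_iso_via (T, d) (T, d') pid"
    using iso_refl r e by (auto simp: ptree_iso_via_iff ptrees_iff is_tree_def mor_eq_def mptrees_iff)
  then have "mptree_iso ((T, d), l) ((T, d'), l)" unfolding mptree_iso_def by auto
  then show ?thesis using mclass_eq_iff[OF r t] by simp
qed

lemma tgt_free_monad:
  assumes r: "r \<in> ptrees P"
  shows "tgt (free_monad P) (pclass P r) = m0 (snd r) (root (fst r))"
proof -
  obtain T d where rr: "r = (T, d)" by (cases r)
  obtain T' d' where ss: "(SOME y. y \<in> pclass P r) = (T', d')" by (cases "SOME y. y \<in> pclass P r")
  have "ptree_iso (T, d) (T', d')" using pclass_some(2)[OF r] rr ss by simp
  then obtain f where f: "is_iso T T' f" "mor_eq T (pcomp d' f) d"
    unfolding ptree_iso_def by (auto simp: ptree_iso_via_iff)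
  have t: "is_tree T" "is_tree T'" using r pclass_some(1)[OF r] rr ss by (auto simp: ptrees_iff)
  have "m0 f (root T) = root T'" by (rule iso_root[OF t f(1)])
  then have "m0 d' (root T') = m0 d (root T)" using f(2) tree_root(1)[OF t(1)] by (auto simp: mor_eq_def)
  then show ?thesis unfolding free_monad_simps ss by (simp add: rr)
qed

lemma src_free_monad:
  assumes r: "r \<in> mptrees P"
  shows "src (free_monad P) (mclass P r) = m0 (snd (fst r)) (snd r)"
proof -
  obtain T d l where rr: "r = ((T, d), l)" by (metis prod.collapse)
  obtain T' d' l' where ss: "(SOME y. y \<in> mclass P r) = ((T', d'), l')" by (metis prod.collapse)
  have "mptree_iso ((T, d), l) ((T', d'), l')" using mclass_some(2)[OF r] rr ss by simp
  then obtain f where f: "mor_eq T (pcomp d' f) d" "m0 f l = l'"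
    unfolding mptree_iso_def by (auto simp: ptree_iso_via_iff)
  have "l \<in> E0 T" using r rr by (auto simp: mptrees_iff leaves_def)
  then have "m0 d' l' = m0 d l" using f by (auto simp: mor_eq_def)
  then show ?thesis unfolding free_monad_simps ss by (simp add: rr)
qed

lemma prj_free_monad:
  assumes r: "r \<in> mptrees P"
  shows "prj (free_monad P) (mclass P r) = pclass P (fst r)"
proof -
  have "ptree_iso (fst r) (fst (SOME y. y \<in> mclass P r))"
    using mclass_some(2)[OF r] unfolding mptree_iso_def ptree_iso_def by blast
  moreover have "fst r \<in> ptrees P" "fst (SOME y. y \<in> mclass P r) \<in> ptrees P"
    using mclass_some(1)[OF r] r by (auto simp: mptrees_iff)
  ultimately show ?thesis unfolding free_monad_simps using pclass_eq_iff by metis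
qed

text \<open>Distinct leaves of a P-tree give distinct marked classes: a P-tree has no automorphism
  other than the identity, by rigidity.\<close>
lemma mclass_leaf_inj:
  assumes r: "r \<in> ptrees P" and l: "l \<in> leaves (fst r)" "l' \<in> leaves (fst r)"
    and eq: "mclass P (r, l) = mclass P (r, l')"
  shows "l = l'"
proof -
  obtain T d where rr: "r = (T, d)" by (cases r)
  have m: "(r, l) \<in> mptrees P" "(r, l') \<in> mptrees P" using r l by (auto simp: mptrees_iff)
  have "mptree_iso (r, l) (r, l')" using eq mclass_eq_iff[OF m] by simp
  then obtain f where f: "is_iso T T f" "mor_eq T (pcomp d f) d" "m0 f l = l'"
    unfolding mptree_iso_def by (auto simp: rr ptree_iso_via_iff)
  have t: "is_tree T" "is_mor T P d" using r rr by (auto simp: ptrees_iff)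
  have fm: "is_mor T T f" using f(1) unfolding is_iso_def by blast
  have "mor_eq T f pid"
    by (rule rigid[OF t(1) t(1) t(2) fm mor_id[OF tree_polyend[OF t(1)]]])
       (use iso_root[OF t(1) t(1) f(1)] f(2) in \<open>auto simp: mor_eq_def\<close>)
  then show ?thesis using f(3) l rr by (auto simp: mor_eq_def leaves_def)
qed

lemma fibre_free_monad:
  assumes r: "r \<in> ptrees P"
  shows "fibre (free_monad P) (pclass P r) = (\<lambda>l. mclass P (r, l)) ` leaves (fst r)"
proof
  show "fibre (free_monad P) (pclass P r) \<subseteq> (\<lambda>l. mclass P (r, l)) ` leaves (fst r)"
  proof
    fix m assume m: "m \<in> fibre (free_monad P) (pclass P r)"
    then obtain r' where r': "r' \<in> mptrees P" "m = mclass P r'"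
      by (auto simp: fibre_def free_monad_simps trm_def)
    have "pclass P (fst r') = pclass P r" using m r' prj_free_monad[OF r'(1)] by (simp add: fibre_def)
    then have "ptree_iso (fst r') r" using pclass_eq_iff[of "fst r'" P r] r r'(1) by (simp add: mptrees_iff)
    then obtain f where f: "ptree_iso_via (fst r') r f" unfolding ptree_iso_def by blast
    obtain T d T' d' l' where rr: "r = (T, d)" "r' = ((T', d'), l')" by (metis prod.collapse)
    have "is_iso T' T f" using f rr by (simp add: ptree_iso_via_iff)
    then have lf: "m0 f l' \<in> leaves T" using iso_leaf r' rr by (auto simp: mptrees_iff)
    have "mptree_iso r' (r, m0 f l')" using f rr unfolding mptree_iso_def by auto
    moreover have m2: "(r, m0 f l') \<in> mptrees P" using r lf rr by (simp add: mptrees_iff)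
    ultimately have "m = mclass P (r, m0 f l')" using mclass_eq_iff[OF r'(1) m2] r'(2) by simp
    then show "m \<in> (\<lambda>l. mclass P (r, l)) ` leaves (fst r)" using lf rr by auto
  qed
next
  show "(\<lambda>l. mclass P (r, l)) ` leaves (fst r) \<subseteq> fibre (free_monad P) (pclass P r)"
  proof
    fix m assume "m \<in> (\<lambda>l. mclass P (r, l)) ` leaves (fst r)"
    then obtain l where l: "l \<in> leaves (fst r)" "m = mclass P (r, l)" by blast
    have rl: "(r, l) \<in> mptrees P" using r l by (simp add: mptrees_iff)
    show "m \<in> fibre (free_monad P) (pclass P r)"
      using rl prj_free_monad[OF rl] l unfolding fibre_def free_monad_simps trm_def by auto
  qed
qed

lemma polyend_free_monad:
  assumes "polyend P" shows "polyend (free_monad P)"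
proof -
  have "src (free_monad P) m \<in> E0 P \<and> prj (free_monad P) m \<in> tr P" if "m \<in> trm P" for m
  proof -
    obtain T d l where r: "((T, d), l) \<in> mptrees P" "m = mclass P ((T, d), l)"
      using \<open>m \<in> trm P\<close> unfolding trm_def by (metis imageE prod.collapse)
    have "is_mor T P d" "l \<in> E0 T" using r by (auto simp: mptrees_iff ptrees_iff leaves_def)
    then show ?thesis using src_free_monad[OF r(1)] prj_free_monad[OF r(1)] r is_morD(3)
      by (auto simp: tr_def mptrees_iff)
  qed
  moreover have "tgt (free_monad P) c \<in> E0 P \<and> finite (fibre (free_monad P) c)" if "c \<in> tr P" for c
  proof -
    obtain T d where r: "(T, d) \<in> ptrees P" "c = pclass P (T, d)"
      using \<open>c \<in> tr P\<close> unfolding tr_def by (metis imageE prod.collapse)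
    have t: "is_tree T" "is_mor T P d" using r by (auto simp: ptrees_iff)
    have "finite (leaves T)" using t(1) by (auto simp: is_tree_def leaves_def)
    then show ?thesis using tgt_free_monad[OF r(1)] fibre_free_monad[OF r(1)] r is_morD(3)[OF t(2)] tree_root[OF t(1)]
      by auto
  qed
  ultimately show ?thesis unfolding polyend_def free_monad_simps by blast
qed

lemma push_ptrees:
  assumes "is_mor Q P \<alpha>" and "(T, d) \<in> ptrees Q" shows "(T, pcomp \<alpha> d) \<in> ptrees P"
  using assms mor_comp by (auto simp: ptrees_iff)

lemma push_iso:
  assumes "ptree_iso_via (T, d) (T', d') f"
  shows "ptree_iso_via (T, pcomp \<alpha> d) (T', pcomp \<alpha> d') f"
  using assms by (simp add: ptree_iso_via_iff mor_eq_def)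

lemma free_mor_pclass:
  assumes a: "is_mor Q P \<alpha>" and r: "r \<in> ptrees Q"
  shows "m1 (free_mor P \<alpha>) (pclass Q r) = pclass P (fst r, pcomp \<alpha> (snd r))"
proof -
  obtain T d where rr: "r = (T, d)" by (cases r)
  obtain T' d' where ss: "(SOME y. y \<in> pclass Q r) = (T', d')" by (cases "SOME y. y \<in> pclass Q r")
  have "ptree_iso (T, d) (T', d')" using pclass_some(2)[OF r] rr ss by simp
  then have i: "ptree_iso (T, pcomp \<alpha> d) (T', pcomp \<alpha> d')" unfolding ptree_iso_def using push_iso by blast
  have "(T', d') \<in> ptrees Q" using pclass_some(1)[OF r] ss by simp
  then have "pclass P (T', pcomp \<alpha> d') = pclass P (T, pcomp \<alpha> d)"
    using pclass_eq_iff push_ptrees[OF a] r rr i ptree_iso_sym by metis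
  then show ?thesis unfolding free_mor_simps ss by (simp add: rr)
qed

lemma free_mor_mclass:
  assumes a: "is_mor Q P \<alpha>" and r: "r \<in> mptrees Q"
  shows "m2 (free_mor P \<alpha>) (mclass Q r) = mclass P ((fst (fst r), pcomp \<alpha> (snd (fst r))), snd r)"
proof -
  obtain T d l where rr: "r = ((T, d), l)" by (metis prod.collapse)
  obtain T' d' l' where ss: "(SOME y. y \<in> mclass Q r) = ((T', d'), l')" by (metis prod.collapse)
  have "mptree_iso ((T, d), l) ((T', d'), l')" using mclass_some(2)[OF r] rr ss by simp
  then have i: "mptree_iso ((T, pcomp \<alpha> d), l) ((T', pcomp \<alpha> d'), l')"
    unfolding mptree_iso_def using push_iso by fastforce
  have "((T', d'), l') \<in> mptrees Q" using mclass_some(1)[OF r] ss by simp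
  then have "((T', pcomp \<alpha> d'), l') \<in> mptrees P" "((T, pcomp \<alpha> d), l) \<in> mptrees P"
    using r rr push_ptrees[OF a] by (auto simp: mptrees_iff)
  then have "mclass P ((T', pcomp \<alpha> d'), l') = mclass P ((T, pcomp \<alpha> d), l)"
    using mclass_eq_iff i by blast
  then show ?thesis unfolding free_mor_simps ss by (simp add: rr)
qed


section \<open>Gluing the trees of an object over the free monad\<close>

text \<open>Names for the colours and nodes/edges of the glued endofunctor: a colour of X, or the
  n-th node (colour, node or edge, according to context) of the tree chosen over x.  Only the
  summands for colours of X, nodes of X and indices are used.\<close>

type_synonym ('x0, 'x1, 'x2, 'p0, 'p1, 'p2) name = "('x0 + 'x1 + 'x2 + 'p0 + 'p1 + 'p2 + nat) list"

type_synonym ('x0, 'x1, 'x2, 'p0, 'p1, 'p2) cell = "('x0, 'x1, 'x2, 'p0, 'p1, 'p2) name set"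

definition Xcol :: "'x0 \<Rightarrow> ('x0, 'x1, 'x2, 'p0, 'p1, 'p2) name" where
  "Xcol a = [Inl a]"

definition Tnode :: "'x1 \<Rightarrow> nat \<Rightarrow> ('x0, 'x1, 'x2, 'p0, 'p1, 'p2) name" where
  "Tnode x n = [Inr (Inl x), Inr (Inr (Inr (Inr (Inr (Inr n)))))]"

definition node_index :: "('x0, 'x1, 'x2, 'p0, 'p1, 'p2) name \<Rightarrow> 'x1 \<times> nat" where
  "node_index w = (case w of [Inr (Inl x), Inr (Inr (Inr (Inr (Inr (Inr n)))))] \<Rightarrow> (x, n))"

definition value_at ::
  "('x0 \<Rightarrow> 'q0) \<Rightarrow> ('x1 \<Rightarrow> (nat, nat, nat, 'q0, 'q1, 'q2) pmor) \<Rightarrow> ('x0, 'x1, 'x2, 'p0, 'p1, 'p2) name \<Rightarrow> 'q0" where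
  "value_at f0 \<delta> w = (case w of [Inl a] \<Rightarrow> f0 a | _ \<Rightarrow> m0 (\<delta> (fst (node_index w))) (snd (node_index w)))"

lemma name_simps [simp]:
  "Xcol a = Xcol a' \<longleftrightarrow> a = a'" "Tnode x n = Tnode x' n' \<longleftrightarrow> x = x' \<and> n = n'"
  "Xcol a \<noteq> Tnode x n"
  "node_index (Tnode x n) = (x, n)"
  "value_at f0 \<delta> (Xcol a) = f0 a" "value_at f0 \<delta> (Tnode x n) = m0 (\<delta> x) n"
  by (simp_all add: Xcol_def Tnode_def node_index_def value_at_def)

locale gluing_data =
  fixes P :: "('p0, 'p1, 'p2) polyend"
    and X :: "('x0, 'x1, 'x2) polyend"
    and \<phi> :: "('x0, 'x1, 'x2, 'p0, ('p0, 'p1, 'p2) ptree set, (('p0, 'p1, 'p2) ptree \<times> nat) set) pmor"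
  assumes P: "polyend P" and phi: "is_mor X (free_monad P) \<phi>"
begin

lemma X_polyend: "polyend X" using is_morD(1)[OF phi] .

definition rep_tree :: "'x1 \<Rightarrow> ntree" where
  "rep_tree x = fst (SOME r. r \<in> m1 \<phi> x)"

definition rep_dec :: "'x1 \<Rightarrow> (nat, nat, nat, 'p0, 'p1, 'p2) pmor" where
  "rep_dec x = snd (SOME r. r \<in> m1 \<phi> x)"

definition leaf_of :: "'x2 \<Rightarrow> nat" where
  "leaf_of e = (THE l. l \<in> leaves (rep_tree (prj X e)) \<and>
                   mclass P ((rep_tree (prj X e), rep_dec (prj X e)), l) = m2 \<phi> e)"

lemma rep_ptree:
  assumes x: "x \<in> E1 X"
  shows "(rep_tree x, rep_dec x) \<in> ptrees P" "pclass P (rep_tree x, rep_dec x) = m1 \<phi> x"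
proof -
  obtain r0 where r0: "r0 \<in> ptrees P" "m1 \<phi> x = pclass P r0"
    using is_morD(4)[OF phi x] by (auto simp: free_monad_simps tr_def)
  have eq: "(rep_tree x, rep_dec x) = (SOME y. y \<in> pclass P r0)" by (simp add: rep_tree_def rep_dec_def r0)
  show "(rep_tree x, rep_dec x) \<in> ptrees P" using pclass_some(1)[OF r0(1)] eq by simp
  moreover have "ptree_iso r0 (rep_tree x, rep_dec x)" using pclass_some(2)[OF r0(1)] eq by simp
  ultimately have "pclass P r0 = pclass P (rep_tree x, rep_dec x)" using pclass_eq_iff[OF r0(1)] by blast
  then show "pclass P (rep_tree x, rep_dec x) = m1 \<phi> x" using r0(2) by simp
qed

lemma rep_tree: "x \<in> E1 X \<Longrightarrow> is_tree (rep_tree x)"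
  and rep_dec: "x \<in> E1 X \<Longrightarrow> is_mor (rep_tree x) P (rep_dec x)"
  using rep_ptree(1) by (auto simp: ptrees_iff)

lemmas rep_treeD = polyendD[OF tree_polyend[OF rep_tree]]

lemma phi_fibre:
  assumes x: "x \<in> E1 X"
  shows "bij_betw (m2 \<phi>) (fibre X x) ((\<lambda>l. mclass P ((rep_tree x, rep_dec x), l)) ` leaves (rep_tree x))"
  using is_morD(9)[OF phi x] fibre_free_monad[OF rep_ptree(1)[OF x]] rep_ptree(2)[OF x] by simp

lemma leaf_of_unique:
  assumes e: "e \<in> E2 X" and l: "l \<in> leaves (rep_tree (prj X e))" "l' \<in> leaves (rep_tree (prj X e))"
    and eq: "mclass P ((rep_tree (prj X e), rep_dec (prj X e)), l) = m2 \<phi> e"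
      "mclass P ((rep_tree (prj X e), rep_dec (prj X e)), l') = m2 \<phi> e"
  shows "l = l'"
  using mclass_leaf_inj[OF rep_ptree(1)[OF polyendD(2)[OF X_polyend e]]] l eq by simp

lemma leaf_of:
  assumes e: "e \<in> E2 X"
  shows "leaf_of e \<in> leaves (rep_tree (prj X e))"
    "mclass P ((rep_tree (prj X e), rep_dec (prj X e)), leaf_of e) = m2 \<phi> e"
proof -
  let ?x = "prj X e"
  have "m2 \<phi> e \<in> (\<lambda>l. mclass P ((rep_tree ?x, rep_dec ?x), l)) ` leaves (rep_tree ?x)"
    using bij_betw_apply[OF phi_fibre[OF polyendD(2)[OF X_polyend e]]] e by (simp add: fibre_def)
  then obtain l where l: "l \<in> leaves (rep_tree ?x)" "mclass P ((rep_tree ?x, rep_dec ?x), l) = m2 \<phi> e"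
    by auto
  have "leaf_of e = l" unfolding leaf_of_def
    by (rule the_equality) (use l leaf_of_unique[OF e] in blast)+
  then show "leaf_of e \<in> leaves (rep_tree ?x)" "mclass P ((rep_tree ?x, rep_dec ?x), leaf_of e) = m2 \<phi> e"
    using l by auto
qed

lemma leaf_of_bij:
  assumes x: "x \<in> E1 X"
  shows "bij_betw leaf_of (fibre X x) (leaves (rep_tree x))"
proof -
  let ?F = "\<lambda>l. mclass P ((rep_tree x, rep_dec x), l)"
  have "bij_betw (?F \<circ> leaf_of) (fibre X x) (?F ` leaves (rep_tree x))"
    using phi_fibre[OF x] by (rule bij_betw_cong[THEN iffD1, rotated]) (auto simp: fibre_def leaf_of)
  then have inj: "inj_on leaf_of (fibre X x)"
    unfolding bij_betw_def by (rule inj_on_imageI2[OF conjunct1])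
  have "leaves (rep_tree x) \<subseteq> leaf_of ` fibre X x"
  proof
    fix l assume l: "l \<in> leaves (rep_tree x)"
    have "?F l \<in> m2 \<phi> ` fibre X x"
      using bij_betw_imp_surj_on[OF phi_fibre[OF x]] l by blast
    then obtain e where e: "e \<in> fibre X x" "?F l = m2 \<phi> e" by blast
    have "e \<in> E2 X" "prj X e = x" using e(1) by (auto simp: fibre_def)
    then have "l = leaf_of e" using leaf_of_unique l e(2) leaf_of by blast
    then show "l \<in> leaf_of ` fibre X x" using e by blast
  qed
  moreover have "leaf_of ` fibre X x \<subseteq> leaves (rep_tree x)" using leaf_of by (auto simp: fibre_def)
  ultimately show ?thesis unfolding bij_betw_def using inj by blast
qed

definition node_name :: "'x1 \<Rightarrow> nat \<Rightarrow> ('x0, 'x1, 'x2, 'p0, 'p1, 'p2) name" where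
  "node_name x n = (if n \<in> leaves (rep_tree x) then Xcol (src X (inv_into (fibre X x) leaf_of n))
                    else if n = root (rep_tree x) then Xcol (tgt X x) else Tnode x n)"

lemma node_name_leaf:
  assumes x: "x \<in> E1 X" and e: "e \<in> fibre X x"
  shows "node_name x (leaf_of e) = Xcol (src X e)"
  using bij_betw_apply[OF leaf_of_bij[OF x] e] inv_into_f_f[OF bij_betw_imp_inj_on[OF leaf_of_bij[OF x]] e]
  by (simp add: node_name_def)

text \<open>A root which is also a leaf (a trivial tree) is named by the source of an edge, so roots
  must additionally be identified with the target of x: colours of the glued endofunctor are
  classes of names under the equivalence generated by these identifications.\<close>
definition root_glue :: "(('x0, 'x1, 'x2, 'p0, 'p1, 'p2) name \<times> ('x0, 'x1, 'x2, 'p0, 'p1, 'p2) name) set" where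
  "root_glue = {(node_name x (root (rep_tree x)), Xcol (tgt X x)) | x. x \<in> E1 X}"

definition glue_class :: "('x0, 'x1, 'x2, 'p0, 'p1, 'p2) name \<Rightarrow> ('x0, 'x1, 'x2, 'p0, 'p1, 'p2) cell" where
  "glue_class w = {w'. (w, w') \<in> (root_glue \<union> root_glue\<inverse>)\<^sup>*}"

lemma glue_class_self: "w \<in> glue_class w"
  by (simp add: glue_class_def)

lemma glue_class_step:
  assumes "(w, w') \<in> root_glue \<union> root_glue\<inverse>"
  shows "glue_class w = glue_class w'"
proof -
  have "(w, w') \<in> (root_glue \<union> root_glue\<inverse>)\<^sup>*" "(w', w) \<in> (root_glue \<union> root_glue\<inverse>)\<^sup>*"
    using assms by (auto intro: r_into_rtrancl)
  then show ?thesis unfolding glue_class_def by (auto intro: rtrancl_trans)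
qed

lemma glue_class_root:
  "x \<in> E1 X \<Longrightarrow> glue_class (node_name x (root (rep_tree x))) = glue_class (Xcol (tgt X x))"
  by (rule glue_class_step) (auto simp: root_glue_def)

lemma glue_class_invariant:
  assumes v: "\<And>x. x \<in> E1 X \<Longrightarrow> v (node_name x (root (rep_tree x))) = v (Xcol (tgt X x))"
    and w: "w' \<in> glue_class w"
  shows "v w' = v w"
proof -
  have "(w, w') \<in> (root_glue \<union> root_glue\<inverse>)\<^sup>*" using w by (simp add: glue_class_def)
  then show ?thesis
  proof (induction rule: rtrancl_induct)
    case (step y z)
    then have "v z = v y" using v unfolding root_glue_def by auto
    then show ?case using step(3) by simp
  qed simp
qed

definition glued_colours :: "('x0, 'x1, 'x2, 'p0, 'p1, 'p2) cell set" where
  "glued_colours = glue_class ` (Xcol ` E0 X \<union> (\<Union>x\<in>E1 X. node_name x ` E0 (rep_tree x)))"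

definition glued_nodes :: "('x0, 'x1, 'x2, 'p0, 'p1, 'p2) cell set" where
  "glued_nodes = {{Tnode x b} | x b. x \<in> E1 X \<and> b \<in> E1 (rep_tree x)}"

definition glued_edges :: "('x0, 'x1, 'x2, 'p0, 'p1, 'p2) cell set" where
  "glued_edges = {{Tnode x e} | x e. x \<in> E1 X \<and> e \<in> E2 (rep_tree x)}"

definition glued :: "(('x0, 'x1, 'x2, 'p0, 'p1, 'p2) cell, ('x0, 'x1, 'x2, 'p0, 'p1, 'p2) cell,
                      ('x0, 'x1, 'x2, 'p0, 'p1, 'p2) cell) polyend" where
  "glued = \<lparr>E0 = glued_colours, E1 = glued_nodes, E2 = glued_edges,
      src = \<lambda>c. case node_index (the_elem c) of (x, e) \<Rightarrow> glue_class (node_name x (src (rep_tree x) e)),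
      prj = \<lambda>c. case node_index (the_elem c) of (x, e) \<Rightarrow> {Tnode x (prj (rep_tree x) e)},
      tgt = \<lambda>c. case node_index (the_elem c) of (x, b) \<Rightarrow> glue_class (node_name x (tgt (rep_tree x) b))\<rparr>"

lemma glued_simps:
  "E0 glued = glued_colours" "E1 glued = glued_nodes" "E2 glued = glued_edges"
  "src glued {Tnode x e} = glue_class (node_name x (src (rep_tree x) e))"
  "prj glued {Tnode x e} = {Tnode x (prj (rep_tree x) e)}"
  "tgt glued {Tnode x b} = glue_class (node_name x (tgt (rep_tree x) b))"
  by (simp_all add: glued_def)

lemma glued_colour_cases:
  assumes "C \<in> glued_colours"
  obtains a where "a \<in> E0 X" "C = glue_class (Xcol a)"
  | x n where "x \<in> E1 X" "n \<in> E0 (rep_tree x)" "C = glue_class (node_name x n)"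
  using assms unfolding glued_colours_def by blast

lemma glued_nodes_iff: "c \<in> glued_nodes \<longleftrightarrow> (\<exists>x b. c = {Tnode x b} \<and> x \<in> E1 X \<and> b \<in> E1 (rep_tree x))"
  unfolding glued_nodes_def by blast

lemma glued_edges_iff: "c \<in> glued_edges \<longleftrightarrow> (\<exists>x e. c = {Tnode x e} \<and> x \<in> E1 X \<and> e \<in> E2 (rep_tree x))"
  unfolding glued_edges_def by blast

lemma glued_colour_node: "x \<in> E1 X \<Longrightarrow> n \<in> E0 (rep_tree x) \<Longrightarrow> glue_class (node_name x n) \<in> glued_colours"
  by (auto simp: glued_colours_def)

lemma glued_fibre:
  assumes x: "x \<in> E1 X" and b: "b \<in> E1 (rep_tree x)"
  shows "fibre glued {Tnode x b} = (\<lambda>e. {Tnode x e}) ` fibre (rep_tree x) b"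
  using x b by (auto simp: fibre_def glued_simps glued_edges_iff)

lemma polyend_glued: "polyend glued"
proof -
  have "src glued c \<in> glued_colours \<and> prj glued c \<in> glued_nodes" if "c \<in> glued_edges" for c
    using that rep_treeD(1,2) glued_colour_node by (auto simp: glued_edges_iff glued_simps glued_nodes_iff)
  moreover have "tgt glued c \<in> glued_colours \<and> finite (fibre glued c)" if "c \<in> glued_nodes" for c
    using that rep_treeD(3,4) glued_fibre glued_colour_node by (auto simp: glued_simps glued_nodes_iff)
  ultimately show ?thesis unfolding polyend_def glued_simps by blast
qed

definition incl :: "'x1 \<Rightarrow> (nat, nat, nat, ('x0, 'x1, 'x2, 'p0, 'p1, 'p2) cell,
    ('x0, 'x1, 'x2, 'p0, 'p1, 'p2) cell, ('x0, 'x1, 'x2, 'p0, 'p1, 'p2) cell) pmor" where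
  "incl x = \<lparr>m0 = \<lambda>n. glue_class (node_name x n), m1 = \<lambda>b. {Tnode x b}, m2 = \<lambda>e. {Tnode x e}\<rparr>"

lemma incl_simps [simp]:
  "m0 (incl x) n = glue_class (node_name x n)" "m1 (incl x) b = {Tnode x b}" "m2 (incl x) e = {Tnode x e}"
  by (simp_all add: incl_def)

lemma incl_mor:
  assumes x: "x \<in> E1 X" shows "is_mor (rep_tree x) glued (incl x)"
proof -
  have "bij_betw (m2 (incl x)) (fibre (rep_tree x) b) (fibre glued (m1 (incl x) b))"
    if "b \<in> E1 (rep_tree x)" for b
    using glued_fibre[OF x that] by (auto simp: bij_betw_def inj_on_def)
  then show ?thesis unfolding is_mor_def
    using tree_polyend[OF rep_tree[OF x]] polyend_glued rep_treeD[OF x] x glued_colour_node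
    by (auto simp: glued_simps glued_nodes_iff glued_edges_iff)
qed

lemma incl_ptree: "x \<in> E1 X \<Longrightarrow> (rep_tree x, incl x) \<in> ptrees glued"
  using rep_tree incl_mor by (simp add: ptrees_iff)

lemma incl_mptree: "e \<in> E2 X \<Longrightarrow> ((rep_tree (prj X e), incl (prj X e)), leaf_of e) \<in> mptrees glued"
  using incl_ptree polyendD(2)[OF X_polyend] leaf_of(1) by (simp add: mptrees_iff)

end


context gluing_data
begin

text \<open>A morphism out of L is given by a value on the colours of X together with morphisms out of
  the trees T_x which agree with it on the leaves and roots (a cocone on the gluing diagram).\<close>
definition compatible ::
  "('q0, 'q1, 'q2) polyend \<Rightarrow> ('x0 \<Rightarrow> 'q0) \<Rightarrow> ('x1 \<Rightarrow> (nat, nat, nat, 'q0, 'q1, 'q2) pmor) \<Rightarrow> bool" where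
  "compatible Q f0 \<delta> \<longleftrightarrow> polyend Q \<and> (\<forall>a\<in>E0 X. f0 a \<in> E0 Q) \<and>
     (\<forall>x\<in>E1 X. is_mor (rep_tree x) Q (\<delta> x)) \<and>
     (\<forall>x\<in>E1 X. \<forall>e\<in>fibre X x. f0 (src X e) = m0 (\<delta> x) (leaf_of e)) \<and>
     (\<forall>x\<in>E1 X. f0 (tgt X x) = m0 (\<delta> x) (root (rep_tree x)))"

definition copair ::
  "('x0 \<Rightarrow> 'q0) \<Rightarrow> ('x1 \<Rightarrow> (nat, nat, nat, 'q0, 'q1, 'q2) pmor) \<Rightarrow>
   (('x0, 'x1, 'x2, 'p0, 'p1, 'p2) cell, ('x0, 'x1, 'x2, 'p0, 'p1, 'p2) cell,
    ('x0, 'x1, 'x2, 'p0, 'p1, 'p2) cell, 'q0, 'q1, 'q2) pmor" where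
  "copair f0 \<delta> = \<lparr>m0 = \<lambda>C. value_at f0 \<delta> (SOME w. w \<in> C),
     m1 = \<lambda>c. case node_index (the_elem c) of (x, b) \<Rightarrow> m1 (\<delta> x) b,
     m2 = \<lambda>c. case node_index (the_elem c) of (x, e) \<Rightarrow> m2 (\<delta> x) e\<rparr>"

lemma copair_simps [simp]:
  "m1 (copair f0 \<delta>) {Tnode x n} = m1 (\<delta> x) n" "m2 (copair f0 \<delta>) {Tnode x n} = m2 (\<delta> x) n"
  by (simp_all add: copair_def)

lemma value_node_name:
  assumes c: "compatible Q f0 \<delta>" and x: "x \<in> E1 X" and n: "n \<in> E0 (rep_tree x)"
  shows "value_at f0 \<delta> (node_name x n) = m0 (\<delta> x) n"
proof (cases "n \<in> leaves (rep_tree x)")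
  case True
  then obtain e where "e \<in> fibre X x" "n = leaf_of e"
    using bij_betw_imp_surj_on[OF leaf_of_bij[OF x]] by blast
  then show ?thesis using node_name_leaf[OF x] c x unfolding compatible_def by simp
next
  case False
  then show ?thesis using c x unfolding compatible_def node_name_def by simp
qed

lemma copair_colour:
  assumes c: "compatible Q f0 \<delta>"
  shows "m0 (copair f0 \<delta>) (glue_class w) = value_at f0 \<delta> w"
proof -
  have root: "value_at f0 \<delta> (node_name x (root (rep_tree x))) = value_at f0 \<delta> (Xcol (tgt X x))"
    if x: "x \<in> E1 X" for x
    using value_node_name[OF c x tree_root(1)[OF rep_tree[OF x]]] c x unfolding compatible_def by simp
  have "(SOME w'. w' \<in> glue_class w) \<in> glue_class w" using glue_class_self by (rule someI)
  then show ?thesis using glue_class_invariant[OF root] by (simp add: copair_def)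
qed

lemma copair_incl:
  assumes c: "compatible Q f0 \<delta>" and x: "x \<in> E1 X"
  shows "mor_eq (rep_tree x) (pcomp (copair f0 \<delta>) (incl x)) (\<delta> x)"
  unfolding mor_eq_def using copair_colour[OF c] value_node_name[OF c x] by simp

lemma copair_colour_mem:
  assumes c: "compatible Q f0 \<delta>" and C: "C \<in> glued_colours"
  shows "m0 (copair f0 \<delta>) C \<in> E0 Q"
  using C
proof (cases rule: glued_colour_cases)
  case (1 a)
  then show ?thesis using copair_colour[OF c] c unfolding compatible_def by simp
next
  case (2 x n)
  then have "is_mor (rep_tree x) Q (\<delta> x)" using c unfolding compatible_def by blast
  then show ?thesis using 2 copair_colour[OF c] value_node_name[OF c] is_morD(3) by simp
qed

lemma copair_mor:
  assumes c: "compatible Q f0 \<delta>"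
  shows "is_mor glued Q (copair f0 \<delta>)"
proof -
  have Q: "polyend Q" and \<delta>: "\<And>x. x \<in> E1 X \<Longrightarrow> is_mor (rep_tree x) Q (\<delta> x)"
    using c unfolding compatible_def by auto
  let ?g = "copair f0 \<delta>"
  have edges: "m2 ?g c \<in> E2 Q \<and> m0 ?g (src glued c) = src Q (m2 ?g c) \<and>
      m1 ?g (prj glued c) = prj Q (m2 ?g c)" if "c \<in> glued_edges" for c
  proof -
    obtain x e where ce: "c = {Tnode x e}" "x \<in> E1 X" "e \<in> E2 (rep_tree x)"
      using \<open>c \<in> glued_edges\<close> unfolding glued_edges_iff by blast
    show ?thesis using ce is_morD(5-7)[OF \<delta>[OF ce(2)] ce(3)] copair_colour[OF c]
        value_node_name[OF c ce(2) rep_treeD(1)[OF ce(2,3)]]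
      by (simp add: glued_simps)
  qed
  have nodes: "m1 ?g b \<in> E1 Q \<and> m0 ?g (tgt glued b) = tgt Q (m1 ?g b) \<and>
      bij_betw (m2 ?g) (fibre glued b) (fibre Q (m1 ?g b))" if "b \<in> glued_nodes" for b
  proof -
    obtain x n where bn: "b = {Tnode x n}" "x \<in> E1 X" "n \<in> E1 (rep_tree x)"
      using \<open>b \<in> glued_nodes\<close> unfolding glued_nodes_iff by blast
    have "bij_betw (\<lambda>e. {Tnode x e}) (fibre (rep_tree x) n) (fibre glued b)"
      using glued_fibre[OF bn(2,3)] bn(1) by (auto simp: bij_betw_def inj_on_def)
    moreover have "bij_betw (m2 ?g \<circ> (\<lambda>e. {Tnode x e})) (fibre (rep_tree x) n) (fibre Q (m1 ?g b))"
      using is_morD(9)[OF \<delta>[OF bn(2)] bn(3)] bn(1) by (simp add: comp_def)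
    ultimately have "bij_betw (m2 ?g) (fibre glued b) (fibre Q (m1 ?g b))"
      using bij_betw_comp_iff by blast
    then show ?thesis using bn is_morD(4,8)[OF \<delta>[OF bn(2)] bn(3)] copair_colour[OF c]
        value_node_name[OF c bn(2) rep_treeD(3)[OF bn(2,3)]]
      by (simp add: glued_simps)
  qed
  show ?thesis unfolding is_mor_def glued_simps
    using polyend_glued Q copair_colour_mem[OF c] edges nodes by blast
qed

lemma glued_mor_eqI:
  assumes col: "\<And>a. a \<in> E0 X \<Longrightarrow> m0 g (glue_class (Xcol a)) = m0 g' (glue_class (Xcol a))"
    and tree: "\<And>x. x \<in> E1 X \<Longrightarrow> mor_eq (rep_tree x) (pcomp g (incl x)) (pcomp g' (incl x))"
  shows "mor_eq glued g g'"
proof -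
  have "m0 g C = m0 g' C" if "C \<in> glued_colours" for C
    using that
  proof (cases rule: glued_colour_cases)
    case (1 a) then show ?thesis using col by simp
  next
    case (2 x n) then show ?thesis using tree[of x] by (simp add: mor_eq_def)
  qed
  moreover have "m1 g c = m1 g' c" if "c \<in> glued_nodes" for c
    using that tree unfolding glued_nodes_iff by (auto simp: mor_eq_def)
  moreover have "m2 g c = m2 g' c" if "c \<in> glued_edges" for c
    using that tree unfolding glued_edges_iff by (auto simp: mor_eq_def)
  ultimately show ?thesis unfolding mor_eq_def glued_simps by blast
qed

end


lemma transport_to_shape:
  assumes \<kappa>: "is_mor Q P \<kappa>" and r0: "(S, G) \<in> ptrees Q" and Td: "(T, d) \<in> ptrees P"
    and same: "pclass P (S, pcomp \<kappa> G) = pclass P (T, d)"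
  shows "\<exists>\<delta>. (T, \<delta>) \<in> ptrees Q \<and> pclass Q (T, \<delta>) = pclass Q (S, G) \<and> mor_eq T (pcomp \<kappa> \<delta>) d"
proof -
  have "ptree_iso (T, d) (S, pcomp \<kappa> G)"
    using same pclass_eq_iff[OF Td push_ptrees[OF \<kappa> r0]] by simp
  then obtain f where f: "is_iso T S f" "mor_eq T (pcomp (pcomp \<kappa> G) f) d"
    unfolding ptree_iso_def by (auto simp: ptree_iso_via_iff)
  have fm: "is_mor T S f" using f(1) unfolding is_iso_def by blast
  have G: "is_mor S Q G" using r0 by (simp add: ptrees_iff)
  have t: "(T, pcomp G f) \<in> ptrees Q"
    using Td mor_comp[OF fm G] by (simp add: ptrees_iff)
  have "ptree_iso_via (T, pcomp G f) (S, G) f" using f(1) by (simp add: ptree_iso_via_iff mor_eq_refl)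
  then have "pclass Q (T, pcomp G f) = pclass Q (S, G)"
    using pclass_eq_iff[OF t r0] unfolding ptree_iso_def by blast
  moreover have "mor_eq T (pcomp \<kappa> (pcomp G f)) d" using f(2) by (simp add: mor_eq_def)
  ultimately show ?thesis using t by blast
qed

text \<open>Two decorations of the same tree which are isomorphic as Q-trees and agree after pushing
  forward to P coincide: the isomorphism is an automorphism fixing the root, hence trivial.\<close>
lemma same_class_rigid:
  assumes T: "is_tree T" and d1: "is_mor T Q d1" and d2: "is_mor T Q d2" and \<kappa>: "is_mor Q P \<kappa>"
    and same: "pclass Q (T, d1) = pclass Q (T, d2)"
    and over: "mor_eq T (pcomp \<kappa> d1) (pcomp \<kappa> d2)"
  shows "mor_eq T d1 d2"
proof -
  have "ptree_iso (T, d2) (T, d1)"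
    using same pclass_eq_iff[of "(T, d2)" Q "(T, d1)"] T d1 d2 by (simp add: ptrees_iff)
  then obtain f where f: "is_iso T T f" "mor_eq T (pcomp d1 f) d2"
    unfolding ptree_iso_def by (auto simp: ptree_iso_via_iff)
  have fm: "is_mor T T f" using f(1) unfolding is_iso_def by blast
  have "m2 (pcomp \<kappa> d1) (m2 f e) = m2 (pcomp \<kappa> d1) (m2 pid e)" if e: "e \<in> E2 T" for e
  proof -
    have "m2 (pcomp \<kappa> d1) (m2 f e) = m2 \<kappa> (m2 d2 e)" using f(2) e by (simp add: mor_eq_def)
    also have "\<dots> = m2 \<kappa> (m2 d1 e)" using over e by (simp add: mor_eq_def)
    finally show ?thesis by simp
  qed
  then have "mor_eq T f pid"
    using rigid[OF T T mor_comp[OF d1 \<kappa>] fm mor_id[OF tree_polyend[OF T]]] iso_root[OF T T f(1)]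
    by simp
  then show ?thesis using f(2) by (simp add: mor_eq_def)
qed

section \<open>The universal property of the glued endofunctor\<close>

context gluing_data
begin

definition presents ::
  "('q0, 'q1, 'q2) polyend \<Rightarrow> ('x0, 'x1, 'x2, 'q0, ('q0, 'q1, 'q2) ptree set, (('q0, 'q1, 'q2) ptree \<times> nat) set) pmor
   \<Rightarrow> ('x1 \<Rightarrow> (nat, nat, nat, 'q0, 'q1, 'q2) pmor) \<Rightarrow> bool" where
  "presents Q h \<delta> \<longleftrightarrow> is_mor X (free_monad Q) h \<and>
     (\<forall>x\<in>E1 X. (rep_tree x, \<delta> x) \<in> ptrees Q \<and> pclass Q (rep_tree x, \<delta> x) = m1 h x) \<and>
     (\<forall>e\<in>E2 X. m2 h e = mclass Q ((rep_tree (prj X e), \<delta> (prj X e)), leaf_of e))"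

lemma presents_phi: "presents P \<phi> rep_dec"
  unfolding presents_def using phi rep_ptree leaf_of(2) by simp

lemma presents_compatible:
  assumes Q: "polyend Q" and pr: "presents Q h \<delta>" shows "compatible Q (m0 h) \<delta>"
proof -
  have h: "is_mor X (free_monad Q) h"
    and tr: "\<And>x. x \<in> E1 X \<Longrightarrow> (rep_tree x, \<delta> x) \<in> ptrees Q \<and> pclass Q (rep_tree x, \<delta> x) = m1 h x"
    and ed: "\<And>e. e \<in> E2 X \<Longrightarrow> m2 h e = mclass Q ((rep_tree (prj X e), \<delta> (prj X e)), leaf_of e)"
    using pr unfolding presents_def by auto
  have leaf: "m0 h (src X e) = m0 (\<delta> x) (leaf_of e)" if x: "x \<in> E1 X" and e: "e \<in> fibre X x" for x e
  proof -
    have e2: "e \<in> E2 X" "prj X e = x" using e by (auto simp: fibre_def)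
    have m: "((rep_tree x, \<delta> x), leaf_of e) \<in> mptrees Q"
      using tr[OF x] leaf_of(1)[OF e2(1)] e2 by (simp add: mptrees_iff)
    have "m0 h (src X e) = src (free_monad Q) (m2 h e)" using is_morD(6)[OF h e2(1)] .
    also have "\<dots> = m0 (\<delta> x) (leaf_of e)" using src_free_monad[OF m] ed[OF e2(1)] e2 by simp
    finally show ?thesis .
  qed
  have root: "m0 h (tgt X x) = m0 (\<delta> x) (root (rep_tree x))" if x: "x \<in> E1 X" for x
    using is_morD(8)[OF h x] tgt_free_monad[of "(rep_tree x, \<delta> x)" Q] tr[OF x] by simp
  show ?thesis unfolding compatible_def
    using Q is_morD(3)[OF h] tr leaf root
    by (simp add: free_monad_simps ptrees_iff)
qed

definition glued_dec :: "(('x0, 'x1, 'x2, 'p0, 'p1, 'p2) cell, ('x0, 'x1, 'x2, 'p0, 'p1, 'p2) cell, ('x0, 'x1, 'x2, 'p0, 'p1, 'p2) cell, 'p0, 'p1, 'p2) pmor" where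
  "glued_dec = copair (m0 \<phi>) rep_dec"

definition glued_unit ::
  "('x0, 'x1, 'x2, ('x0, 'x1, 'x2, 'p0, 'p1, 'p2) cell, (('x0, 'x1, 'x2, 'p0, 'p1, 'p2) cell, ('x0, 'x1, 'x2, 'p0, 'p1, 'p2) cell, ('x0, 'x1, 'x2, 'p0, 'p1, 'p2) cell) ptree set,
    ((('x0, 'x1, 'x2, 'p0, 'p1, 'p2) cell, ('x0, 'x1, 'x2, 'p0, 'p1, 'p2) cell, ('x0, 'x1, 'x2, 'p0, 'p1, 'p2) cell) ptree \<times> nat) set) pmor" where
  "glued_unit = \<lparr>m0 = \<lambda>a. glue_class (Xcol a), m1 = \<lambda>x. pclass glued (rep_tree x, incl x),
                 m2 = \<lambda>e. mclass glued ((rep_tree (prj X e), incl (prj X e)), leaf_of e)\<rparr>"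

lemma glued_unit_simps [simp]:
  "m0 glued_unit a = glue_class (Xcol a)" "m1 glued_unit x = pclass glued (rep_tree x, incl x)"
  "m2 glued_unit e = mclass glued ((rep_tree (prj X e), incl (prj X e)), leaf_of e)"
  by (simp_all add: glued_unit_def)

lemma glued_unit_mor: "is_mor X (free_monad glued) glued_unit"
proof -
  have bij: "bij_betw (m2 glued_unit) (fibre X x) (fibre (free_monad glued) (m1 glued_unit x))"
    if x: "x \<in> E1 X" for x
  proof -
    let ?G = "\<lambda>l. mclass glued ((rep_tree x, incl x), l)"
    have "inj_on ?G (leaves (rep_tree x))"
      using mclass_leaf_inj[OF incl_ptree[OF x]] by (auto intro: inj_onI)
    then have "bij_betw ?G (leaves (rep_tree x)) (?G ` leaves (rep_tree x))"
      by (simp add: bij_betw_def)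
    then have "bij_betw (?G \<circ> leaf_of) (fibre X x) (?G ` leaves (rep_tree x))"
      using bij_betw_trans leaf_of_bij[OF x] by blast
    then have "bij_betw (m2 glued_unit) (fibre X x) (?G ` leaves (rep_tree x))"
      by (rule bij_betw_cong[THEN iffD1, rotated]) (auto simp: fibre_def)
    then show ?thesis using fibre_free_monad[OF incl_ptree[OF x]] by simp
  qed
  have "src (free_monad glued) (m2 glued_unit e) = m0 glued_unit (src X e)" if e: "e \<in> E2 X" for e
    using src_free_monad[OF incl_mptree[OF e]] node_name_leaf[OF polyendD(2)[OF X_polyend e]] e
    by (simp add: fibre_def)
  moreover have "prj (free_monad glued) (m2 glued_unit e) = m1 glued_unit (prj X e)" if "e \<in> E2 X" for e
    using prj_free_monad[OF incl_mptree[OF that]] by simp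
  moreover have "tgt (free_monad glued) (m1 glued_unit x) = m0 glued_unit (tgt X x)" if "x \<in> E1 X" for x
    using tgt_free_monad[OF incl_ptree[OF that]] glue_class_root[OF that] by simp
  moreover have "m0 glued_unit a \<in> E0 (free_monad glued)" if "a \<in> E0 X" for a
    using that by (auto simp: free_monad_simps glued_simps glued_colours_def)
  moreover have "m1 glued_unit x \<in> E1 (free_monad glued)" if "x \<in> E1 X" for x
    using incl_ptree[OF that] by (auto simp: free_monad_simps tr_def)
  moreover have "m2 glued_unit e \<in> E2 (free_monad glued)" if "e \<in> E2 X" for e
    using incl_mptree[OF that] by (auto simp: free_monad_simps trm_def)
  ultimately show ?thesis unfolding is_mor_def
    using X_polyend polyend_free_monad[OF polyend_glued] bij by auto
qed

lemma presents_factor: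
  assumes Q: "polyend Q" and pr: "presents Q h \<delta>"
  shows "mor_eq X (pcomp (free_mor Q (copair (m0 h) \<delta>)) glued_unit) h"
proof -
  let ?g = "copair (m0 h) \<delta>"
  have c: "compatible Q (m0 h) \<delta>" by (rule presents_compatible[OF Q pr])
  have g: "is_mor glued Q ?g" by (rule copair_mor[OF c])
  have tr: "\<And>x. x \<in> E1 X \<Longrightarrow> (rep_tree x, \<delta> x) \<in> ptrees Q \<and> pclass Q (rep_tree x, \<delta> x) = m1 h x"
    and ed: "\<And>e. e \<in> E2 X \<Longrightarrow> m2 h e = mclass Q ((rep_tree (prj X e), \<delta> (prj X e)), leaf_of e)"
    using pr unfolding presents_def by auto
  have nodes: "m1 (free_mor Q ?g) (m1 glued_unit x) = m1 h x" if x: "x \<in> E1 X" for x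
  proof -
    have "m1 (free_mor Q ?g) (m1 glued_unit x) = pclass Q (rep_tree x, pcomp ?g (incl x))"
      using free_mor_pclass[OF g incl_ptree[OF x]] by simp
    also have "\<dots> = m1 h x"
      using pclass_cong(2)[OF _ mor_eq_sym[OF copair_incl[OF c x]]] tr[OF x] by simp
    finally show ?thesis .
  qed
  have edges: "m2 (free_mor Q ?g) (m2 glued_unit e) = m2 h e" if e: "e \<in> E2 X" for e
  proof -
    let ?x = "prj X e"
    have x: "?x \<in> E1 X" using polyendD(2)[OF X_polyend e] .
    have "m2 (free_mor Q ?g) (m2 glued_unit e) = mclass Q ((rep_tree ?x, pcomp ?g (incl ?x)), leaf_of e)"
      using free_mor_mclass[OF g incl_mptree[OF e]] by simp
    also have "\<dots> = m2 h e"
      using mclass_cong[OF _ mor_eq_sym[OF copair_incl[OF c x]]] tr[OF x] leaf_of(1)[OF e] ed[OF e]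
      by (simp add: mptrees_iff)
    finally show ?thesis .
  qed
  show ?thesis unfolding mor_eq_def
    using copair_colour[OF c] nodes edges by (simp add: free_mor_simps(1))
qed

lemma glued_dec_mor: "is_mor glued P glued_dec"
  unfolding glued_dec_def by (rule copair_mor[OF presents_compatible[OF P presents_phi]])

lemma glued_arrow: "arrow_ok P X \<phi> glued glued_dec glued_unit"
  unfolding arrow_ok_def
  using glued_dec_mor glued_unit_mor presents_factor[OF P presents_phi] by (simp add: glued_dec_def)

end

locale gluing_test = gluing_data P X \<phi>
  for P :: "('p0, 'p1, 'p2) polyend"
    and X :: "('x0, 'x1, 'x2) polyend"
    and \<phi> :: "('x0, 'x1, 'x2, 'p0, ('p0, 'p1, 'p2) ptree set, (('p0, 'p1, 'p2) ptree \<times> nat) set) pmor" +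
  fixes Q :: "('q0, 'q1, 'q2) polyend"
    and \<kappa> :: "('q0, 'q1, 'q2, 'p0, 'p1, 'p2) pmor"
    and h :: "('x0, 'x1, 'x2, 'q0, ('q0, 'q1, 'q2) ptree set, (('q0, 'q1, 'q2) ptree \<times> nat) set) pmor"
  assumes \<kappa>: "is_mor Q P \<kappa>" and h: "is_mor X (free_monad Q) h"
    and over: "mor_eq X (pcomp (free_mor P \<kappa>) h) \<phi>"
begin

lemma over_nodes: "x \<in> E1 X \<Longrightarrow> m1 (free_mor P \<kappa>) (m1 h x) = m1 \<phi> x"
  and over_edges: "e \<in> E2 X \<Longrightarrow> m2 (free_mor P \<kappa>) (m2 h e) = m2 \<phi> e"
  using over by (simp_all add: mor_eq_def)

definition lift_dec :: "'x1 \<Rightarrow> (nat, nat, nat, 'q0, 'q1, 'q2) pmor" where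
  "lift_dec x = (SOME \<delta>. (rep_tree x, \<delta>) \<in> ptrees Q \<and> pclass Q (rep_tree x, \<delta>) = m1 h x \<and>
                          mor_eq (rep_tree x) (pcomp \<kappa> \<delta>) (rep_dec x))"

lemma lift_dec:
  assumes x: "x \<in> E1 X"
  shows "(rep_tree x, lift_dec x) \<in> ptrees Q" "pclass Q (rep_tree x, lift_dec x) = m1 h x"
    "mor_eq (rep_tree x) (pcomp \<kappa> (lift_dec x)) (rep_dec x)"
proof -
  obtain S G where SG: "(S, G) \<in> ptrees Q" "m1 h x = pclass Q (S, G)"
    using is_morD(4)[OF h x] by (auto simp: free_monad_simps tr_def)
  have "pclass P (S, pcomp \<kappa> G) = pclass P (rep_tree x, rep_dec x)"
    using over_nodes[OF x] free_mor_pclass[OF \<kappa> SG(1)] SG(2) rep_ptree(2)[OF x] by simp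
  from transport_to_shape[OF \<kappa> SG(1) rep_ptree(1)[OF x] this]
  show "(rep_tree x, lift_dec x) \<in> ptrees Q" "pclass Q (rep_tree x, lift_dec x) = m1 h x"
    "mor_eq (rep_tree x) (pcomp \<kappa> (lift_dec x)) (rep_dec x)"
    unfolding lift_dec_def using SG(2) by (metis (mono_tags, lifting) someI_ex)+
qed

text \<open>h is presented by the transported decorations: the leaf carrying h(e) is leaf_of e, since
  both lie over phi(e).\<close>
lemma presents_h: "presents Q h lift_dec"
proof -
  have "m2 h e = mclass Q ((rep_tree (prj X e), lift_dec (prj X e)), leaf_of e)" if e: "e \<in> E2 X" for e
  proof -
    let ?x = "prj X e"
    have x: "?x \<in> E1 X" using polyendD(2)[OF X_polyend e] .
    have "m2 h e \<in> fibre (free_monad Q) (m1 h ?x)"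
      using is_morD(5,7)[OF h e] by (simp add: fibre_def)
    then obtain l where l: "l \<in> leaves (rep_tree ?x)" "m2 h e = mclass Q ((rep_tree ?x, lift_dec ?x), l)"
      using fibre_free_monad[OF lift_dec(1)[OF x]] lift_dec(2)[OF x] by auto
    have m: "((rep_tree ?x, lift_dec ?x), l) \<in> mptrees Q" using lift_dec(1)[OF x] l(1) by (simp add: mptrees_iff)
    have "m2 \<phi> e = mclass P ((rep_tree ?x, pcomp \<kappa> (lift_dec ?x)), l)"
      using over_edges[OF e] free_mor_mclass[OF \<kappa> m] l(2) by simp
    also have "\<dots> = mclass P ((rep_tree ?x, rep_dec ?x), l)"
      using mclass_cong[OF _ mor_eq_sym[OF lift_dec(3)[OF x]]] rep_ptree(1)[OF x] l(1)
      by (simp add: mptrees_iff)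
    finally have "l = leaf_of e" using leaf_of_unique[OF e l(1) leaf_of(1)[OF e]] leaf_of(2)[OF e] by simp
    then show ?thesis using l by simp
  qed
  then show ?thesis unfolding presents_def using h lift_dec(1,2) by blast
qed

definition factor :: "(('x0, 'x1, 'x2, 'p0, 'p1, 'p2) cell, ('x0, 'x1, 'x2, 'p0, 'p1, 'p2) cell, ('x0, 'x1, 'x2, 'p0, 'p1, 'p2) cell, 'q0, 'q1, 'q2) pmor" where
  "factor = copair (m0 h) lift_dec"

lemma factor_compatible: "compatible Q (m0 h) lift_dec"
  by (rule presents_compatible[OF is_morD(1)[OF \<kappa>] presents_h])

lemma factor_mor: "is_mor glued Q factor"
  unfolding factor_def by (rule copair_mor[OF factor_compatible])

lemma factor_unit: "mor_eq X (pcomp (free_mor Q factor) glued_unit) h"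
  unfolding factor_def by (rule presents_factor[OF is_morD(1)[OF \<kappa>] presents_h])

lemma factor_over: "mor_eq glued (pcomp \<kappa> factor) glued_dec"
proof (rule glued_mor_eqI)
  have c: "compatible P (m0 \<phi>) rep_dec" by (rule presents_compatible[OF P presents_phi])
  show "m0 (pcomp \<kappa> factor) (glue_class (Xcol a)) = m0 glued_dec (glue_class (Xcol a))"
    if "a \<in> E0 X" for a
    using that over copair_colour[OF factor_compatible] copair_colour[OF c]
    unfolding factor_def glued_dec_def by (simp add: mor_eq_def free_mor_simps(1))
  show "mor_eq (rep_tree x) (pcomp (pcomp \<kappa> factor) (incl x)) (pcomp glued_dec (incl x))"
    if x: "x \<in> E1 X" for x
    using copair_incl[OF factor_compatible x] copair_incl[OF c x] lift_dec(3)[OF x]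
    unfolding factor_def glued_dec_def mor_eq_def by simp
qed

text \<open>Uniqueness: any factorisation restricts on T_x to a decoration in the class h(x) lying over
  D_x, which by rigidity is lift_dec x.\<close>
lemma factor_unique:
  assumes g: "is_mor glued Q g" and g_over: "mor_eq glued (pcomp \<kappa> g) glued_dec"
    and g_unit: "mor_eq X (pcomp (free_mor Q g) glued_unit) h"
  shows "mor_eq glued g factor"
proof (rule glued_mor_eqI)
  show "m0 g (glue_class (Xcol a)) = m0 factor (glue_class (Xcol a))" if "a \<in> E0 X" for a
    using that g_unit copair_colour[OF factor_compatible]
    unfolding factor_def by (simp add: mor_eq_def free_mor_simps(1))
  show "mor_eq (rep_tree x) (pcomp g (incl x)) (pcomp factor (incl x))" if x: "x \<in> E1 X" for x
  proof -
    have gi: "is_mor (rep_tree x) Q (pcomp g (incl x))" by (rule mor_comp[OF incl_mor[OF x] g])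
    have "pclass Q (rep_tree x, pcomp g (incl x)) = m1 (free_mor Q g) (m1 glued_unit x)"
      using free_mor_pclass[OF g incl_ptree[OF x]] by simp
    also have "\<dots> = pclass Q (rep_tree x, lift_dec x)" using g_unit x lift_dec(2)[OF x] by (simp add: mor_eq_def)
    finally have same: "pclass Q (rep_tree x, pcomp g (incl x)) = pclass Q (rep_tree x, lift_dec x)" .
    have "mor_eq (rep_tree x) (pcomp \<kappa> (pcomp g (incl x))) (pcomp \<kappa> (lift_dec x))"
      using g_over lift_dec(3)[OF x] copair_incl[OF presents_compatible[OF P presents_phi] x]
        is_morD(3-5)[OF incl_mor[OF x]]
      unfolding glued_dec_def mor_eq_def by (simp add: glued_simps)
    then have "mor_eq (rep_tree x) (pcomp g (incl x)) (lift_dec x)"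
      using same_class_rigid[OF rep_tree[OF x] gi _ \<kappa> same] lift_dec(1)[OF x] by (simp add: ptrees_iff)
    then show ?thesis
      using copair_incl[OF factor_compatible x] unfolding factor_def mor_eq_def by simp
  qed
qed

end

context gluing_data
begin

theorem glued_universal: "factors_uniquely P X \<phi> glued glued_dec glued_unit Q \<kappa> h"
  unfolding factors_uniquely_def
proof (intro impI)
  assume "is_mor Q P \<kappa> \<and> is_mor X (free_monad Q) h \<and> mor_eq X (pcomp (free_mor P \<kappa>) h) \<phi>"
  then interpret test: gluing_test P X \<phi> Q \<kappa> h by unfold_locales auto
  show "\<exists>g. is_mor glued Q g \<and> mor_eq glued (pcomp \<kappa> g) glued_dec \<and>
            mor_eq X (pcomp (free_mor Q g) glued_unit) h \<and>
            (\<forall>g'. is_mor glued Q g' \<and> mor_eq glued (pcomp \<kappa> g') glued_dec \<and>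
                  mor_eq X (pcomp (free_mor Q g') glued_unit) h \<longrightarrow> mor_eq glued g' g)"
    using test.factor_mor test.factor_over test.factor_unit test.factor_unique by blast
qed

end

theorem mainTheorem16:
  fixes P :: "('p0, 'p1, 'p2) polyend"
    and X :: "('x0, 'x1, 'x2) polyend"
    and \<phi> :: "('x0, 'x1, 'x2, 'p0, ('p0, 'p1, 'p2) ptree set, (('p0, 'p1, 'p2) ptree \<times> nat) set) pmor"
  assumes "polyend P"
    and "is_mor X (free_monad P) \<phi>"
  shows "\<exists>(L :: (('x0 + 'x1 + 'x2 + 'p0 + 'p1 + 'p2 + nat) list set,
                 ('x0 + 'x1 + 'x2 + 'p0 + 'p1 + 'p2 + nat) list set,
                 ('x0 + 'x1 + 'x2 + 'p0 + 'p1 + 'p2 + nat) list set) polyend) lam \<eta>.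
           arrow_ok P X \<phi> L lam \<eta> \<and>
           (\<forall>(Q :: ('q0, 'q1, 'q2) polyend) \<kappa> h. factors_uniquely P X \<phi> L lam \<eta> Q \<kappa> h) \<and>
           (\<forall>(Q :: (('x0 + 'x1 + 'x2 + 'p0 + 'p1 + 'p2 + nat) list set,
                     ('x0 + 'x1 + 'x2 + 'p0 + 'p1 + 'p2 + nat) list set,
                     ('x0 + 'x1 + 'x2 + 'p0 + 'p1 + 'p2 + nat) list set) polyend) \<kappa> h.
              factors_uniquely P X \<phi> L lam \<eta> Q \<kappa> h)"
proof -
  interpret gluing_data P X \<phi> using assms by unfold_locales
  show ?thesis
    by (intro exI[of _ glued] exI[of _ glued_dec] exI[of _ glued_unit] conjI allI glued_arrow glued_universal)
qed

end
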